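(* Let $S_1,\ldots,S_n$ be Polish spaces, $\mu$ a Borel probability measure on $S=\prod_iS_i$ and $\mathcal{I}$ a collection of subsets of $\{1,\ldots,n\}$, and assume $\mu$ satisfies $\mathrm{LSI}_{(\partial,\mathcal{I})}(\sigma^2)$ with $\sigma^2>0$. Then for every $f\in L^\infty(\mu)$ and every $p\ge2$, \[ \|f\|_p^2-\|f\|_2^2\le2\sigma^2(p-2)\|\partial f\|_p^2 \qquad\text{and}\qquad \|f\|_p^2-\|f\|_2^2\le2\sigma^2(p-2)\|\mathfrak{h}f\|_p^2 . \]
   Context: For $I\subset\{1,\ldots,n\}$, $\overline{x_I}=(x_i)_{i\notin I}$, $(\overline{x_I},y_I)$ the point with coordinates $y_i$ ($i\in I$) and $x_i$ ($i\notin I$), and $(m_{\overline{x_I}})$ the disintegration of $\mu$ given $\overline{x_I}$ (probability measures on $\prod_{i\in I}S_i$ with $\int g\,d\mu=\int\int g(\overline{x_I},y_I)dm_{\overline{x_I}}(y_I)d\overline{\mu_I}(\overline{x_I})$, $\overline{\mu_I}$ the law of $\overline{x_I}$). For $I\in\mathcal{I}$: $\partial_If(x)=(\frac12\int(f(x)-f(\overline{x_I},y_I))^2dm_{\overline{x_I}}(y_I))^{1/2}$, $|\partial f|=(\sum_{I\in\mathcal{I}}(\partial_If)^2)^{1/2}$; $\mathfrak{h}_If(x)=\frac1{\sqrt2}\|f(\overline{x_I},y_I)-f(\overline{x_I},z_I)\|_{L^\infty(m_{\overline{x_I}}\otimes m_{\overline{x_I}})}$, $|\mathfrak{h}f|=(\sum_{I\in\mathcal{I}}(\mathfrak{h}_If)^2)^{1/2}$.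 $\|g\|_p=(\mathbb{E}_\mu|g|^p)^{1/p}$, $\|\partial f\|_p=\||\partial f|\|_p$, $\|\mathfrak{h}f\|_p=\||\mathfrak{h}f|\|_p$. $\mathrm{LSI}_{(\partial,\mathcal{I})}(\sigma^2)$ means $\mathrm{Ent}_\mu(f^2)\le2\sigma^2\mathbb{E}_\mu|\partial f|^2$ for all $f\in L^\infty(\mu)$, with $\mathrm{Ent}_\mu(g)=\mathbb{E}_\mu g\log g-\mathbb{E}_\mu g\log\mathbb{E}_\mu g$. *)

theory Defs
  imports "HOL-Analysis.Analysis" "HOL-Probability.Probability"
begin

definition Polish_top :: "'a topology \<Rightarrow> bool" where
  "Polish_top X \<longleftrightarrow> completely_metrizable_space X \<and> separable_space X"

definition borel_of :: "'a topology \<Rightarrow> 'a measure" where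
  "borel_of X = sigma (topspace X) {U. openin X U}"

definition prodM :: "(nat \<Rightarrow> 'a topology) \<Rightarrow> nat set \<Rightarrow> (nat \<Rightarrow> 'a) measure" where
  "prodM X J = Pi\<^sub>M J (\<lambda>i. borel_of (X i))"

definition xbar :: "nat \<Rightarrow> nat set \<Rightarrow> (nat \<Rightarrow> 'a) \<Rightarrow> (nat \<Rightarrow> 'a)" where
  "xbar n I x = restrict x ({1..n} - I)"

definition glue :: "nat \<Rightarrow> nat set \<Rightarrow> (nat \<Rightarrow> 'a) \<Rightarrow> (nat \<Rightarrow> 'a) \<Rightarrow> (nat \<Rightarrow> 'a)" where
  "glue n I x y = merge ({1..n} - I) I (xbar n I x, y)"

definition marg :: "(nat \<Rightarrow> 'a topology) \<Rightarrow> nat \<Rightarrow> (nat \<Rightarrow> 'a) measure \<Rightarrow> nat set \<Rightarrow> (nat \<Rightarrow> 'a) measure" where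
  "marg X n \<mu> I = distr \<mu> (prodM X ({1..n} - I)) (xbar n I)"

definition is_disintegration ::
  "(nat \<Rightarrow> 'a topology) \<Rightarrow> nat \<Rightarrow> (nat \<Rightarrow> 'a) measure \<Rightarrow> nat set \<Rightarrow> ((nat \<Rightarrow> 'a) \<Rightarrow> (nat \<Rightarrow> 'a) measure) \<Rightarrow> bool" where
  "is_disintegration X n \<mu> I m \<longleftrightarrow>
     m \<in> measurable (prodM X ({1..n} - I)) (subprob_algebra (prodM X I)) \<and>
     (\<forall>z \<in> space (prodM X ({1..n} - I)). prob_space (m z)) \<and>
     (\<forall>g \<in> borel_measurable \<mu>. (\<integral>\<^sup>+ x. g x \<partial>\<mu>) =
        (\<integral>\<^sup>+ z. (\<integral>\<^sup>+ y. g (merge ({1..n} - I) I (z, y)) \<partial>(m z)) \<partial>(marg X n \<mu> I)))"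

definition partialI :: "nat \<Rightarrow> nat set \<Rightarrow> ((nat \<Rightarrow> 'a) \<Rightarrow> (nat \<Rightarrow> 'a) measure) \<Rightarrow> ((nat \<Rightarrow> 'a) \<Rightarrow> real) \<Rightarrow> (nat \<Rightarrow> 'a) \<Rightarrow> real" where
  "partialI n I m f x = sqrt (1/2 * (\<integral>y. (f x - f (glue n I x y))\<^sup>2 \<partial>(m (xbar n I x))))"

definition grad_norm :: "nat \<Rightarrow> nat set set \<Rightarrow> (nat set \<Rightarrow> (nat \<Rightarrow> 'a) \<Rightarrow> (nat \<Rightarrow> 'a) measure) \<Rightarrow> ((nat \<Rightarrow> 'a) \<Rightarrow> real) \<Rightarrow> (nat \<Rightarrow> 'a) \<Rightarrow> real" where
  "grad_norm n \<I> m f x = sqrt (\<Sum>I\<in>\<I>. (partialI n I (m I) f x)\<^sup>2)"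

definition hI :: "nat \<Rightarrow> nat set \<Rightarrow> ((nat \<Rightarrow> 'a) \<Rightarrow> (nat \<Rightarrow> 'a) measure) \<Rightarrow> ((nat \<Rightarrow> 'a) \<Rightarrow> real) \<Rightarrow> (nat \<Rightarrow> 'a) \<Rightarrow> real" where
  "hI n I m f x = (1 / sqrt 2) * real_of_ereal
     (esssup (m (xbar n I x) \<Otimes>\<^sub>M m (xbar n I x))
        (\<lambda>(y, z). ereal \<bar>f (glue n I x y) - f (glue n I x z)\<bar>))"

definition h_norm :: "nat \<Rightarrow> nat set set \<Rightarrow> (nat set \<Rightarrow> (nat \<Rightarrow> 'a) \<Rightarrow> (nat \<Rightarrow> 'a) measure) \<Rightarrow> ((nat \<Rightarrow> 'a) \<Rightarrow> real) \<Rightarrow> (nat \<Rightarrow> 'a) \<Rightarrow> real" where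
  "h_norm n \<I> m f x = sqrt (\<Sum>I\<in>\<I>. (hI n I (m I) f x)\<^sup>2)"

definition Linfty :: "'b measure \<Rightarrow> ('b \<Rightarrow> real) \<Rightarrow> bool" where
  "Linfty \<mu> f \<longleftrightarrow> f \<in> borel_measurable \<mu> \<and> (\<exists>C. AE x in \<mu>. \<bar>f x\<bar> \<le> C)"

definition Lp_norm :: "'b measure \<Rightarrow> real \<Rightarrow> ('b \<Rightarrow> real) \<Rightarrow> real" where
  "Lp_norm \<mu> p g = (\<integral>x. \<bar>g x\<bar> powr p \<partial>\<mu>) powr (1 / p)"

text \<open>Entropy (with the convention 0 log 0 = 0, as ln 0 = 0 in Isabelle).\<close>
definition Ent :: "'b measure \<Rightarrow> ('b \<Rightarrow> real) \<Rightarrow> real" where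
  "Ent \<mu> g = (\<integral>x. g x * ln (g x) \<partial>\<mu>) - (\<integral>x. g x \<partial>\<mu>) * ln (\<integral>x. g x \<partial>\<mu>)"

definition LSI :: "nat \<Rightarrow> (nat \<Rightarrow> 'a) measure \<Rightarrow> nat set set \<Rightarrow> (nat set \<Rightarrow> (nat \<Rightarrow> 'a) \<Rightarrow> (nat \<Rightarrow> 'a) measure) \<Rightarrow> real \<Rightarrow> bool" where
  "LSI n \<mu> \<I> m \<sigma>2 \<longleftrightarrow>
     (\<forall>f. Linfty \<mu> f \<longrightarrow>
        Ent \<mu> (\<lambda>x. (f x)\<^sup>2) \<le> 2 * \<sigma>2 * (\<integral>x. (grad_norm n \<I> m f x)\<^sup>2 \<partial>\<mu>))"

end

(* For bounded f write G(q) = ||f||_q^2.  A direct computation gives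
   G'(q) = (2/q^2) ||f||_q^(2-q) Ent(|f|^q).  Apply the log-Sobolev inequality to |f|^(q/2) and
   use the discrete chain rule
     E |d(|f|^(q/2))|^2 <= (q^2/2) E[|f|^(q-2) |d f|^2],
   which holds because the pairs (x, (xbar_I, y_I)) and ((xbar_I, y_I), x) have the same law;
   Hoelder's inequality then gives Ent(|f|^q) <= sigma^2 q^2 ||f||_q^(q-2) ||d f||_q^2, that is
   G'(q) <= 2 sigma^2 ||d f||_q^2 <= 2 sigma^2 ||d f||_p^2 for 2 < q <= p, and the mean value
   theorem on [2, p] gives the bound with the gradient d f.  The bound with h f follows from
   d_I f <= h_I f almost everywhere: a typical point is a typical resample of its own coordinates
   outside I, so its distance to the resamples is controlled by the essential oscillation.
   A general f in L^infinity is replaced by a bounded function that agrees with it almost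
   everywhere, which changes none of the quantities involved. *)

theory Submission
  imports Defs
begin

lemma powr_diff_le_mult_diff:
  fixes s t r :: real
  assumes t: "0 \<le> t" "t \<le> s" and r: "1 \<le> r"
  shows "s powr r - t powr r \<le> r * s powr (r - 1) * (s - t)"
proof (cases "t = 0 \<or> t = s")
  case True
  then show ?thesis
  proof
    assume "t = 0"
    have "s powr r = s powr (r - 1) * s"
      using t \<open>t = 0\<close> by (cases "s = 0") (simp_all add: powr_diff)
    also have "\<dots> \<le> r * s powr (r - 1) * s"
      using t r mult_right_mono[of 1 r "s powr (r - 1)"] by (intro mult_right_mono) auto
    finally show ?thesis using \<open>t = 0\<close> r by simp
  qed simp
next
  case False
  then have t0: "0 < t" and ts: "t < s" using t by auto
  obtain z where z: "t < z" "z < s" "s powr r - t powr r = (s - t) * (r * z powr (r - 1))"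
    using MVT2[OF ts, of "\<lambda>x. x powr r" "\<lambda>x. r * x powr (r - 1)"] t0
    by (force intro: has_real_derivative_powr)
  have "z powr (r - 1) \<le> s powr (r - 1)"
    using z t0 r by (intro powr_mono2) auto
  then show ?thesis using z ts r by (simp add: mult.commute mult_left_mono)
qed

lemma abs_powr_half_diff_sq_le:
  fixes a b q :: real
  assumes q: "2 \<le> q"
  shows "(\<bar>a\<bar> powr (q/2) - \<bar>b\<bar> powr (q/2))\<^sup>2 \<le> q\<^sup>2 / 4 * (a - b)\<^sup>2 * (\<bar>a\<bar> powr (q - 2) + \<bar>b\<bar> powr (q - 2))"
proof -
  have ordered: "(s powr (q/2) - t powr (q/2))\<^sup>2 \<le> q\<^sup>2 / 4 * (s - t)\<^sup>2 * s powr (q - 2)"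
    if "0 \<le> t" "t \<le> s" for s t :: real
  proof -
    have "0 \<le> s powr (q/2) - t powr (q/2)" using that q by (simp add: powr_mono2)
    moreover have "s powr (q/2) - t powr (q/2) \<le> q/2 * s powr (q/2 - 1) * (s - t)"
      using powr_diff_le_mult_diff[OF that, of "q/2"] q by simp
    ultimately have "(s powr (q/2) - t powr (q/2))\<^sup>2 \<le> (q/2 * s powr (q/2 - 1) * (s - t))\<^sup>2"
      by (simp add: power_mono)
    also have "\<dots> = q\<^sup>2 / 4 * (s - t)\<^sup>2 * (s powr (q/2 - 1))\<^sup>2"
      by (simp add: power_mult_distrib power_divide)
    also have "(s powr (q/2 - 1))\<^sup>2 = s powr (q - 2)"
      using that by (simp add: power2_eq_square powr_add[symmetric])
    finally show ?thesis .
  qed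
  have ab: "(\<bar>a\<bar> - \<bar>b\<bar>)\<^sup>2 \<le> (a - b)\<^sup>2"
    by (metis abs_triangle_ineq3 abs_ge_zero power_mono power2_abs)
  show ?thesis
  proof (cases "\<bar>b\<bar> \<le> \<bar>a\<bar>")
    case True
    have "(\<bar>a\<bar> powr (q/2) - \<bar>b\<bar> powr (q/2))\<^sup>2 \<le> q\<^sup>2 / 4 * (\<bar>a\<bar> - \<bar>b\<bar>)\<^sup>2 * \<bar>a\<bar> powr (q - 2)"
      using ordered[OF _ True] by simp
    also have "\<dots> \<le> q\<^sup>2 / 4 * (a - b)\<^sup>2 * \<bar>a\<bar> powr (q - 2)"
      using ab by (intro mult_right_mono mult_left_mono) auto
    also have "\<dots> \<le> q\<^sup>2 / 4 * (a - b)\<^sup>2 * (\<bar>a\<bar> powr (q - 2) + \<bar>b\<bar> powr (q - 2))"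
      by (intro mult_left_mono) auto
    finally show ?thesis .
  next
    case False
    have "(\<bar>a\<bar> powr (q/2) - \<bar>b\<bar> powr (q/2))\<^sup>2 \<le> q\<^sup>2 / 4 * (\<bar>b\<bar> - \<bar>a\<bar>)\<^sup>2 * \<bar>b\<bar> powr (q - 2)"
      using ordered[of "\<bar>a\<bar>" "\<bar>b\<bar>"] False by (simp add: power2_commute)
    also have "\<dots> \<le> q\<^sup>2 / 4 * (a - b)\<^sup>2 * \<bar>b\<bar> powr (q - 2)"
      using ab by (intro mult_right_mono mult_left_mono) (auto simp: power2_commute)
    also have "\<dots> \<le> q\<^sup>2 / 4 * (a - b)\<^sup>2 * (\<bar>a\<bar> powr (q - 2) + \<bar>b\<bar> powr (q - 2))"
      by (intro mult_left_mono) auto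
    finally show ?thesis .
  qed
qed

lemma abs_diff_le_of_abs_le:
  fixes s t :: real
  shows "\<bar>s\<bar> \<le> B \<Longrightarrow> \<bar>t\<bar> \<le> B \<Longrightarrow> \<bar>s - t\<bar> \<le> 2 * B"
  by simp

lemma diff_sq_le_of_abs_le:
  fixes s t :: real
  assumes "\<bar>s\<bar> \<le> B" "\<bar>t\<bar> \<le> B"
  shows "(s - t)\<^sup>2 \<le> 4 * B\<^sup>2"
proof -
  have "\<bar>s - t\<bar>\<^sup>2 \<le> (2 * B)\<^sup>2"
    using abs_diff_le_of_abs_le[OF assms] by (intro power_mono) auto
  then show ?thesis by (simp add: power_mult_distrib)
qed

lemma mult_ln_sq_le:
  fixes t :: real assumes "0 < t" "t \<le> 1"
  shows "t * (ln t)\<^sup>2 \<le> 4"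
proof -
  have "ln (1 / sqrt t) \<le> 1 / sqrt t - 1" using assms by (intro ln_le_minus_one) simp
  moreover have "ln (1 / sqrt t) = - ln t / 2" using assms by (simp add: ln_div ln_sqrt)
  ultimately have "(- ln t)\<^sup>2 \<le> (2 / sqrt t)\<^sup>2" using assms by (intro power_mono) auto
  then show ?thesis using assms by (simp add: power_divide field_simps)
qed

lemma mult_abs_ln_le:
  fixes t :: real assumes "0 < t" "t \<le> 1"
  shows "t * \<bar>ln t\<bar> \<le> 1"
proof -
  have "ln (1 / t) \<le> 1 / t - 1" using assms by (intro ln_le_minus_one) simp
  then show ?thesis using assms by (simp add: ln_div field_simps)
qed

lemma powr_mult_abs_ln_le:
  fixes t C e :: real
  assumes "0 \<le> t" "t \<le> C" "1 \<le> C" "1 \<le> e"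
  shows "\<bar>t powr e * ln t\<bar> \<le> 1 + C powr (e + 1)"
proof (cases "t \<le> 1")
  case True
  show ?thesis
  proof (cases "t = 0")
    case False
    have "t powr e \<le> t" using True assms powr_mono'[of 1 e t] by simp
    then have "\<bar>t powr e * ln t\<bar> \<le> t * \<bar>ln t\<bar>" by (simp add: abs_mult mult_right_mono)
    also have "\<dots> \<le> 1" using False True assms by (intro mult_abs_ln_le) auto
    finally show ?thesis by (smt (verit) powr_ge_zero)
  qed simp
next
  case False
  have "ln t \<le> C" using False assms by (smt (verit) ln_less_self)
  then have "\<bar>t powr e * ln t\<bar> \<le> C powr e * C"
    using False assms by (auto simp: abs_mult intro!: mult_mono powr_mono2)
  then show ?thesis using assms by (simp add: powr_add)
qed

lemma powr_mult_ln_sq_le: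
  fixes t C e E :: real
  assumes "0 \<le> t" "t \<le> C" "1 \<le> C" "1 \<le> e" "e \<le> E"
  shows "t powr e * (ln t)\<^sup>2 \<le> 4 + C powr (E + 2)"
proof (cases "t \<le> 1")
  case True
  show ?thesis
  proof (cases "t = 0")
    case False
    have "t powr e \<le> t" using True assms powr_mono'[of 1 e t] by simp
    then have "t powr e * (ln t)\<^sup>2 \<le> t * (ln t)\<^sup>2" by (simp add: mult_right_mono)
    also have "\<dots> \<le> 4" using False True assms by (intro mult_ln_sq_le) auto
    finally show ?thesis by (smt (verit) powr_ge_zero)
  qed simp
next
  case False
  have "ln t \<le> C" using False assms by (smt (verit) ln_less_self)
  then have "(ln t)\<^sup>2 \<le> C\<^sup>2"
    using False by (intro power_mono) auto
  moreover have "t powr e \<le> C powr E"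
    using assms False by (meson less_eq_real_def not_le order_trans powr_mono powr_mono2 zero_le_one)
  ultimately have "t powr e * (ln t)\<^sup>2 \<le> C powr E * C\<^sup>2"
    by (intro mult_mono) auto
  then show ?thesis using assms by (simp add: powr_add powr_realpow)
qed

lemma powr_Maclaurin:
  fixes t q d :: real
  assumes "0 < t"
  obtains \<xi> where "\<bar>\<xi>\<bar> \<le> \<bar>d\<bar>"
    and "t powr (q + d) - t powr q - d * (t powr q * ln t) = t powr (q + \<xi>) * (ln t)\<^sup>2 / 2 * d\<^sup>2"
proof -
  define diff where "diff k s = (ln t) ^ k * t powr (q + s)" for k s
  have "DERIV (diff k) s :> diff (Suc k) s" for k s
    unfolding diff_def using assms by (auto intro!: derivative_eq_intros simp: algebra_simps)
  then obtain \<xi> where "\<bar>\<xi>\<bar> \<le> \<bar>d\<bar>"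
    "diff 0 d = (\<Sum>k<2. diff k 0 / fact k * d ^ k) + diff 2 \<xi> / fact 2 * d ^ 2"
    using Maclaurin_all_le[of diff "diff 0"] by blast
  then show ?thesis
    by (intro that[of \<xi>]) (auto simp: diff_def eval_nat_numeral algebra_simps)
qed

lemma powr_Maclaurin_remainder_le:
  fixes t C q d :: real
  assumes "0 \<le> t" "t \<le> C" "1 \<le> C" "\<bar>d\<bar> \<le> 1" "1 \<le> q - \<bar>d\<bar>"
  shows "\<bar>t powr (q + d) - t powr q - d * (t powr q * ln t)\<bar> \<le> (4 + C powr (q + 3)) * d\<^sup>2"
proof (cases "t = 0")
  case False
  then obtain \<xi> where \<xi>: "\<bar>\<xi>\<bar> \<le> \<bar>d\<bar>"
    and eq: "t powr (q + d) - t powr q - d * (t powr q * ln t) = t powr (q + \<xi>) * (ln t)\<^sup>2 / 2 * d\<^sup>2"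
    using assms powr_Maclaurin by (metis less_eq_real_def)
  have "t powr (q + \<xi>) * (ln t)\<^sup>2 \<le> 4 + C powr (q + 1 + 2)"
    using assms \<xi> by (intro powr_mult_ln_sq_le) auto
  then have "t powr (q + \<xi>) * (ln t)\<^sup>2 \<le> 4 + C powr (q + 3)"
    by (simp add: add.assoc)
  moreover have "0 \<le> t powr (q + \<xi>) * (ln t)\<^sup>2" "0 \<le> C powr (q + 3)" by simp_all
  ultimately have "t powr (q + \<xi>) * (ln t)\<^sup>2 / 2 \<le> 4 + C powr (q + 3)"
    by linarith
  then have "t powr (q + \<xi>) * (ln t)\<^sup>2 / 2 * d\<^sup>2 \<le> (4 + C powr (q + 3)) * d\<^sup>2"
    by (intro mult_right_mono) auto
  then show ?thesis unfolding eq by simp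
qed simp

lemma powr_sq_eq: "0 \<le> (t::real) \<Longrightarrow> (t powr r)\<^sup>2 = t powr (2 * r)"
  by (cases "t = 0") (simp_all add: power2_eq_square powr_add[symmetric])

lemma sq_powr_eq: "0 \<le> (t::real) \<Longrightarrow> (t\<^sup>2) powr r = t powr (2 * r)"
  by (cases "t = 0") (simp_all add: powr_powr[symmetric] powr_realpow)

section \<open>Moments, entropy and \<open>L\<^sup>p\<close> norms\<close>

lemma (in prob_space) integrable_bounded:
  fixes f :: "'a \<Rightarrow> real"
  assumes "f \<in> borel_measurable M" "\<And>x. x \<in> space M \<Longrightarrow> \<bar>f x\<bar> \<le> B"
  shows "integrable M f"
  using assms by (intro integrable_const_bound[where B=B]) auto

lemma (in prob_space) abs_integral_le_const:
  fixes f :: "'a \<Rightarrow> real"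
  assumes "integrable M f" "AE x in M. \<bar>f x\<bar> \<le> c"
  shows "\<bar>\<integral>x. f x \<partial>M\<bar> \<le> c"
proof -
  have "AE x in M. f x \<le> c" "AE x in M. - c \<le> f x"
    using assms(2) by (auto elim: eventually_mono)
  then show ?thesis
    using integral_le_const[OF assms(1)] integral_ge_const[OF assms(1)] by fastforce
qed

lemma (in prob_space) has_real_derivative_moment:
  fixes g :: "'a \<Rightarrow> real"
  assumes g[measurable]: "g \<in> borel_measurable M" and bound: "\<And>x. x \<in> space M \<Longrightarrow> \<bar>g x\<bar> \<le> C"
    and q: "1 < q"
  shows "((\<lambda>r. \<integral>x. \<bar>g x\<bar> powr r \<partial>M) has_real_derivative (\<integral>x. \<bar>g x\<bar> powr q * ln \<bar>g x\<bar> \<partial>M)) (at q)"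
proof -
  define C' where "C' = max C 1"
  have C': "1 \<le> C'" "\<And>x. x \<in> space M \<Longrightarrow> \<bar>g x\<bar> \<le> C'"
    using bound by (force simp: C'_def)+
  define K where "K = 4 + C' powr (q + 3)"
  define \<delta> where "\<delta> = min 1 (q - 1)"
  have int_powr: "integrable M (\<lambda>x. \<bar>g x\<bar> powr r)" if "0 \<le> r" for r
    using C' that by (intro integrable_bounded[where B="C' powr r"]) (auto intro!: powr_mono2)
  have int_ln: "integrable M (\<lambda>x. \<bar>g x\<bar> powr q * ln \<bar>g x\<bar>)"
    using C' q by (intro integrable_bounded[where B="1 + C' powr (q + 1)"]) (auto intro!: powr_mult_abs_ln_le)
  let ?F = "\<lambda>r. \<integral>x. \<bar>g x\<bar> powr r \<partial>M"
  let ?F' = "\<integral>x. \<bar>g x\<bar> powr q * ln \<bar>g x\<bar> \<partial>M"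
  \<comment> \<open>the second-order Maclaurin remainder is bounded uniformly in x\<close>
  have est: "\<bar>(?F (q + h) - ?F q) / h - ?F'\<bar> \<le> K * \<bar>h\<bar>" if h: "h \<noteq> 0" "\<bar>h\<bar> < \<delta>" for h
  proof -
    have "integrable M (\<lambda>x. \<bar>g x\<bar> powr (q + h))"
      using h q by (intro int_powr) (auto simp: \<delta>_def abs_less_iff)
    then have "\<bar>?F (q + h) - ?F q - h * ?F'\<bar> =
          \<bar>\<integral>x. \<bar>g x\<bar> powr (q + h) - \<bar>g x\<bar> powr q - h * (\<bar>g x\<bar> powr q * ln \<bar>g x\<bar>) \<partial>M\<bar>"
      using int_powr[of q] int_ln q by simp
    also have "\<dots> \<le> K * h\<^sup>2"
      using h C' by (intro abs_integral_le_const AE_I2)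
        (auto simp: K_def \<delta>_def int_powr int_ln intro!: powr_Maclaurin_remainder_le)
    finally have "\<bar>?F (q + h) - ?F q - h * ?F'\<bar> \<le> K * h\<^sup>2" .
    moreover have "(?F (q + h) - ?F q) / h - ?F' = (?F (q + h) - ?F q - h * ?F') / h"
      using h by (simp add: field_simps)
    ultimately show ?thesis
      using h by (simp add: abs_divide divide_le_eq power2_eq_square mult.assoc)
  qed
  have "((\<lambda>h. (?F (q + h) - ?F q) / h - ?F') \<longlongrightarrow> 0) (at 0)"
  proof (rule Lim_null_comparison)
    show "\<forall>\<^sub>F h in at 0. norm ((?F (q + h) - ?F q) / h - ?F') \<le> K * \<bar>h\<bar>"
      using q unfolding eventually_at by (intro exI[of _ \<delta>]) (auto simp: \<delta>_def intro!: est)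
  qed (auto intro!: tendsto_eq_intros)
  then show ?thesis unfolding DERIV_def by (simp add: LIM_zero_iff)
qed

lemma Ent_abs_powr:
  "Ent M (\<lambda>x. \<bar>g x\<bar> powr q) = q * (\<integral>x. \<bar>g x\<bar> powr q * ln \<bar>g x\<bar> \<partial>M)
      - (\<integral>x. \<bar>g x\<bar> powr q \<partial>M) * ln (\<integral>x. \<bar>g x\<bar> powr q \<partial>M)"
proof -
  have "(\<lambda>x. \<bar>g x\<bar> powr q * ln (\<bar>g x\<bar> powr q)) = (\<lambda>x. q * (\<bar>g x\<bar> powr q * ln \<bar>g x\<bar>))"
    by auto
  then show ?thesis unfolding Ent_def by simp
qed

lemma Lp_norm_sq: "(Lp_norm M q g)\<^sup>2 = (\<integral>x. \<bar>g x\<bar> powr q \<partial>M) powr (2 / q)"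
  unfolding Lp_norm_def by (simp add: powr_sq_eq integral_nonneg_AE)

lemma (in prob_space) integral_abs_powr_pos:
  fixes g :: "'a \<Rightarrow> real"
  assumes g[measurable]: "g \<in> borel_measurable M" and bound: "\<And>x. x \<in> space M \<Longrightarrow> \<bar>g x\<bar> \<le> C"
    and q: "0 \<le> q" and nonzero: "\<not> (AE x in M. g x = 0)"
  shows "0 < (\<integral>x. \<bar>g x\<bar> powr q \<partial>M)"
proof -
  have "integrable M (\<lambda>x. \<bar>g x\<bar> powr q)"
    using bound q by (intro integrable_bounded[where B="C powr q"]) (auto intro!: powr_mono2)
  moreover have "\<not> (AE x in M. \<bar>g x\<bar> powr q = 0)"
    using nonzero by simp
  ultimately show ?thesis
    by (metis integral_nonneg_AE integral_nonneg_eq_0_iff_AE less_eq_real_def powr_ge_zero abs_ge_zero AE_I2)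
qed

lemma (in prob_space) has_real_derivative_Lp_norm_sq:
  fixes g :: "'a \<Rightarrow> real"
  assumes g[measurable]: "g \<in> borel_measurable M" and bound: "\<And>x. x \<in> space M \<Longrightarrow> \<bar>g x\<bar> \<le> C"
    and q: "1 < q" and nonzero: "\<not> (AE x in M. g x = 0)"
  shows "((\<lambda>r. (Lp_norm M r g)\<^sup>2) has_real_derivative
           2 / q\<^sup>2 * Lp_norm M q g powr (2 - q) * Ent M (\<lambda>x. \<bar>g x\<bar> powr q)) (at q)"
proof -
  define F where "F r = (\<integral>x. \<bar>g x\<bar> powr r \<partial>M)" for r
  define F' where "F' = (\<integral>x. \<bar>g x\<bar> powr q * ln \<bar>g x\<bar> \<partial>M)"
  have "0 < F q"
    unfolding F_def using integral_abs_powr_pos[OF g bound _ nonzero] q by simp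
  have dF: "(F has_real_derivative F') (at q)"
    unfolding F_def[abs_def] F'_def by (rule has_real_derivative_moment[OF g bound q])
  have "((\<lambda>r. 2 / r) has_real_derivative - (2 / q\<^sup>2)) (at q)"
    using q by (auto intro!: derivative_eq_intros simp: power2_eq_square)
  from DERIV_powr[OF dF \<open>0 < F q\<close> this]
  have "((\<lambda>r. F r powr (2 / r)) has_real_derivative
          F q powr (2 / q) * (- (2 / q\<^sup>2) * ln (F q) + F' * (2 / q) / F q)) (at q)" .
  moreover have "F q powr (2 / q) * (- (2 / q\<^sup>2) * ln (F q) + F' * (2 / q) / F q)
      = 2 / q\<^sup>2 * (F q powr (1 / q)) powr (2 - q) * (q * F' - F q * ln (F q))"
  proof -
    have "(F q powr (1 / q)) powr (2 - q) = F q powr (2 / q) / F q"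
      using q \<open>0 < F q\<close> by (simp add: powr_powr powr_diff diff_divide_distrib)
    then show ?thesis
      using q \<open>0 < F q\<close> by (simp add: field_simps power2_eq_square)
  qed
  ultimately show ?thesis
    unfolding Lp_norm_sq Ent_abs_powr by (simp add: F_def F'_def Lp_norm_def)
qed

lemma Holder_inequality_integral:
  fixes a b :: "'a \<Rightarrow> real"
  assumes a0: "\<And>x. 0 \<le> a x" and b0: "\<And>x. 0 \<le> b x"
    and st: "1 < s" "1 < t" "1/s + 1/t = 1"
    and ia: "integrable M (\<lambda>x. a x powr s)" and ib: "integrable M (\<lambda>x. b x powr t)"
    and iab: "integrable M (\<lambda>x. a x * b x)"
  shows "(\<integral>x. a x * b x \<partial>M) \<le> Lp_norm M s a * Lp_norm M t b"
proof -
  define A where "A = (\<integral>x. a x powr s \<partial>M)"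
  define B where "B = (\<integral>x. b x powr t \<partial>M)"
  have A0: "0 \<le> A" and B0: "0 \<le> B" unfolding A_def B_def by (auto intro!: integral_nonneg_AE)
  have norms: "Lp_norm M s a = A powr (1/s)" "Lp_norm M t b = B powr (1/t)"
    using a0 b0 unfolding Lp_norm_def A_def B_def by simp_all
  show ?thesis
  proof (cases "A = 0 \<or> B = 0")
    case True
    then have "AE x in M. a x powr s = 0 \<or> b x powr t = 0"
      using integral_nonneg_eq_0_iff_AE[OF ia] integral_nonneg_eq_0_iff_AE[OF ib]
      unfolding A_def B_def by (auto elim: eventually_mono)
    then have "AE x in M. a x * b x = 0" by (auto elim: eventually_mono)
    then show ?thesis using A0 B0 unfolding norms by (simp add: integral_eq_zero_AE)
  next
    case False
    then have "0 < A" "0 < B" using A0 B0 by auto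
    then have pos: "0 < Lp_norm M s a" "0 < Lp_norm M t b"
      and pow: "Lp_norm M s a powr s = A" "Lp_norm M t b powr t = B"
      unfolding norms using st by (simp_all add: powr_powr)
    have Young: "a x * b x / (Lp_norm M s a * Lp_norm M t b) \<le> a x powr s / (s * A) + b x powr t / (t * B)" for x
    proof -
      have "(a x / Lp_norm M s a) * (b x / Lp_norm M t b)
          \<le> (a x / Lp_norm M s a) powr s / s + (b x / Lp_norm M t b) powr t / t"
        using a0[of x] b0[of x] pos st by (intro Youngs_inequality) auto
      then show ?thesis
        using a0[of x] b0[of x] pos pow by (simp add: powr_divide field_simps)
    qed
    have "(\<integral>x. a x * b x \<partial>M) / (Lp_norm M s a * Lp_norm M t b)
        = (\<integral>x. a x * b x / (Lp_norm M s a * Lp_norm M t b) \<partial>M)" by simp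
    also have "\<dots> \<le> (\<integral>x. a x powr s / (s * A) + b x powr t / (t * B) \<partial>M)"
      using iab ia ib Young by (intro integral_mono) auto
    also have "\<dots> = 1"
      using ia ib \<open>0 < A\<close> \<open>0 < B\<close> st unfolding A_def B_def by simp
    finally show ?thesis
      using pos by (simp add: divide_le_eq)
  qed
qed

lemma (in prob_space) Lp_norm_mono_exponent:
  fixes g :: "'a \<Rightarrow> real"
  assumes g[measurable]: "g \<in> borel_measurable M" and bound: "\<And>x. x \<in> space M \<Longrightarrow> \<bar>g x\<bar> \<le> B"
    and zp: "0 < z" "z \<le> p"
  shows "Lp_norm M z g \<le> Lp_norm M p g"
proof (cases "z = p")
  case False
  then have zp: "0 < z" "z < p" using zp by auto
  have int: "integrable M (\<lambda>x. \<bar>g x\<bar> powr r)" if "0 \<le> r" for r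
    using bound that by (intro integrable_bounded[where B="B powr r"]) (auto intro!: powr_mono2)
  have "(\<integral>x. \<bar>g x\<bar> powr z * 1 \<partial>M)
      \<le> Lp_norm M (p / z) (\<lambda>x. \<bar>g x\<bar> powr z) * Lp_norm M (p / (p - z)) (\<lambda>x. 1)"
    using zp int by (intro Holder_inequality_integral) (auto simp: field_simps powr_powr)
  also have "\<dots> = (\<integral>x. \<bar>g x\<bar> powr p \<partial>M) powr (z / p)"
    using zp unfolding Lp_norm_def by (simp add: powr_powr prob_space)
  finally have "(\<integral>x. \<bar>g x\<bar> powr z \<partial>M) powr (1 / z) \<le> ((\<integral>x. \<bar>g x\<bar> powr p \<partial>M) powr (z / p)) powr (1 / z)"
    using zp by (intro powr_mono2) (auto intro!: integral_nonneg_AE)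
  then show ?thesis
    using zp unfolding Lp_norm_def by (simp add: powr_powr)
qed simp

lemma (in prob_space) integral_abs_powr_mult_sq_le:
  fixes g D :: "'a \<Rightarrow> real"
  assumes g[measurable]: "g \<in> borel_measurable M" and g_bound: "\<And>x. x \<in> space M \<Longrightarrow> \<bar>g x\<bar> \<le> C"
    and D[measurable]: "D \<in> borel_measurable M" and D_nonneg: "\<And>x. 0 \<le> D x"
    and D_bound: "\<And>x. x \<in> space M \<Longrightarrow> D x \<le> B" and q: "2 < q"
  shows "(\<integral>x. \<bar>g x\<bar> powr (q - 2) * (D x)\<^sup>2 \<partial>M) \<le> Lp_norm M q g powr (q - 2) * (Lp_norm M q D)\<^sup>2"
proof -
  have "(\<integral>x. \<bar>g x\<bar> powr (q - 2) * (D x)\<^sup>2 \<partial>M)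
      \<le> Lp_norm M (q / (q - 2)) (\<lambda>x. \<bar>g x\<bar> powr (q - 2)) * Lp_norm M (q / 2) (\<lambda>x. (D x)\<^sup>2)"
  proof (rule Holder_inequality_integral)
    show "integrable M (\<lambda>x. (\<bar>g x\<bar> powr (q - 2)) powr (q / (q - 2)))"
      using g_bound q by (intro integrable_bounded[where B="C powr q"]) (auto simp: powr_powr intro!: powr_mono2)
    show "integrable M (\<lambda>x. ((D x)\<^sup>2) powr (q / 2))"
      using D_nonneg D_bound q by (intro integrable_bounded[where B="B powr q"]) (auto simp: sq_powr_eq intro!: powr_mono2)
    show "integrable M (\<lambda>x. \<bar>g x\<bar> powr (q - 2) * (D x)\<^sup>2)"
      using g_bound D_nonneg D_bound q by (intro integrable_bounded[where B="C powr (q - 2) * B\<^sup>2"])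
        (auto simp: abs_mult intro!: mult_mono powr_mono2 power_mono)
  qed (use q in \<open>auto simp: field_simps\<close>)
  also have "Lp_norm M (q / (q - 2)) (\<lambda>x. \<bar>g x\<bar> powr (q - 2)) = Lp_norm M q g powr (q - 2)"
    using q unfolding Lp_norm_def by (simp add: powr_powr integral_nonneg_AE)
  also have "Lp_norm M (q / 2) (\<lambda>x. (D x)\<^sup>2) = (Lp_norm M q D)\<^sup>2"
    using q D_nonneg unfolding Lp_norm_sq unfolding Lp_norm_def by (simp add: sq_powr_eq)
  finally show ?thesis .
qed

lemma Lp_norm_cong_AE:
  assumes "u \<in> borel_measurable M" "v \<in> borel_measurable M" "AE x in M. u x = v x"
  shows "Lp_norm M p u = Lp_norm M p v"
proof -
  have "(\<integral>x. \<bar>u x\<bar> powr p \<partial>M) = (\<integral>x. \<bar>v x\<bar> powr p \<partial>M)"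
    using assms by (intro integral_cong_AE) (auto elim: eventually_mono)
  then show ?thesis unfolding Lp_norm_def by simp
qed

lemma Lp_norm_mono_AE:
  assumes "integrable M (\<lambda>x. \<bar>u x\<bar> powr p)" "integrable M (\<lambda>x. \<bar>v x\<bar> powr p)"
    and "AE x in M. \<bar>u x\<bar> \<le> \<bar>v x\<bar>" and "0 < p"
  shows "Lp_norm M p u \<le> Lp_norm M p v"
proof -
  have "(\<integral>x. \<bar>u x\<bar> powr p \<partial>M) \<le> (\<integral>x. \<bar>v x\<bar> powr p \<partial>M)"
    using assms by (intro integral_mono_AE) (auto elim!: eventually_mono intro: powr_mono2)
  then show ?thesis
    unfolding Lp_norm_def using assms(4) by (intro powr_mono2) (auto intro!: integral_nonneg_AE)
qed

section \<open>Essential suprema along a kernel\<close>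

lemma esssup_less_iff_rat:
  fixes f :: "'a \<Rightarrow> ereal"
  assumes f[measurable]: "f \<in> borel_measurable M"
  shows "esssup M f < a \<longleftrightarrow> (\<exists>r::rat. ereal (real_of_rat r) < a \<and> emeasure M {x \<in> space M. ereal (real_of_rat r) < f x} = 0)"
proof
  assume "esssup M f < a"
  then obtain c where c: "emeasure M {x \<in> space M. c < f x} = 0" "c < a"
    unfolding esssup_eq[OF f] Inf_less_iff by auto
  obtain r :: rat where r: "c < ereal (real_of_rat r)" "ereal (real_of_rat r) < a"
    using ereal_dense3[OF c(2)] by auto
  have c_sets: "{x \<in> space M. c < f x} \<in> sets M" by measurable
  have "emeasure M {x \<in> space M. ereal (real_of_rat r) < f x} = 0"
    by (rule emeasure_eq_0[OF c_sets c(1)]) (use r(1) in \<open>auto intro: less_trans\<close>)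
  then show "\<exists>r::rat. ereal (real_of_rat r) < a \<and> emeasure M {x \<in> space M. ereal (real_of_rat r) < f x} = 0"
    using r by blast
next
  assume "\<exists>r::rat. ereal (real_of_rat r) < a \<and> emeasure M {x \<in> space M. ereal (real_of_rat r) < f x} = 0"
  then show "esssup M f < a"
    unfolding esssup_eq[OF f] by (meson Inf_lower le_less_trans mem_Collect_eq)
qed

lemma borel_measurable_esssup_kernel:
  fixes \<Phi> :: "'a \<Rightarrow> 'b \<Rightarrow> ereal"
  assumes \<Phi>[measurable]: "(\<lambda>(x, w). \<Phi> x w) \<in> borel_measurable (M \<Otimes>\<^sub>M N)"
    and L[measurable]: "L \<in> measurable M (subprob_algebra N)"
  shows "(\<lambda>x. esssup (L x) (\<Phi> x)) \<in> borel_measurable M"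
proof (rule borel_measurableI_less)
  fix a :: ereal
  define null where "null c x \<longleftrightarrow> emeasure (L x) {w \<in> space N. c < \<Phi> x w} = 0" for c x
  have "(SIGMA x:space M. {w \<in> space N. c < \<Phi> x w}) = {v \<in> space (M \<Otimes>\<^sub>M N). c < \<Phi> (fst v) (snd v)}" for c
    by (auto simp: space_pair_measure)
  then have "(\<lambda>x. emeasure (L x) {w \<in> space N. c < \<Phi> x w}) \<in> borel_measurable M" for c
    by (intro emeasure_measurable_subprob_algebra2[OF _ L]) simp
  then have null_sets: "{x \<in> space M. null c x} \<in> sets M" for c
    unfolding null_def by measurable
  have "esssup (L x) (\<Phi> x) < a \<longleftrightarrow> (\<exists>r::rat. ereal (real_of_rat r) < a \<and> null (ereal (real_of_rat r)) x)"
    if x: "x \<in> space M" for x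
  proof -
    have sets: "sets (L x) = sets N"
      using measurable_space[OF L x] by (simp add: space_subprob_algebra)
    have "\<Phi> x \<in> borel_measurable (L x)"
      using measurable_Pair2[OF \<Phi> x] by (simp add: measurable_cong_sets[OF sets refl])
    from esssup_less_iff_rat[OF this] show ?thesis
      unfolding null_def sets_eq_imp_space_eq[OF sets] .
  qed
  then have "{x \<in> space M. esssup (L x) (\<Phi> x) < a}
      = (\<Union>r::rat. {x \<in> space M. ereal (real_of_rat r) < a \<and> null (ereal (real_of_rat r)) x})"
    by auto
  also have "\<dots> \<in> sets M"
    using null_sets by (intro sets.countable_UN') (auto simp: Collect_conj_eq)
  finally show "{x \<in> space M. esssup (L x) (\<Phi> x) < a} \<in> sets M" .
qed

section \<open>Resampling a block of coordinates\<close>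

locale disintegration = prob_space \<mu> for \<mu> :: "(nat \<Rightarrow> 'a) measure" +
  fixes X :: "nat \<Rightarrow> 'a topology" and n :: nat and I :: "nat set"
    and m :: "(nat \<Rightarrow> 'a) \<Rightarrow> (nat \<Rightarrow> 'a) measure"
  assumes sets_eq: "sets \<mu> = sets (prodM X {1..n})"
    and I_subset: "I \<subseteq> {1..n}" and is_disintegration: "is_disintegration X n \<mu> I m"
begin

abbreviation "Z \<equiv> prodM X ({1..n} - I)"
abbreviation "Y \<equiv> prodM X I"
abbreviation "resample x \<equiv> m (xbar n I x)"

lemma xbar_measurable: "xbar n I \<in> measurable \<mu> Z"
proof -
  have "(\<lambda>f. restrict f ({1..n} - I)) \<in> measurable (prodM X {1..n}) Z"
    unfolding prodM_def by (rule measurable_restrict_subset) auto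
  then show ?thesis
    unfolding xbar_def[abs_def] by (simp add: measurable_cong_sets[OF sets_eq refl])
qed

lemma merge_measurable: "merge ({1..n} - I) I \<in> measurable (Z \<Otimes>\<^sub>M Y) \<mu>"
proof -
  have "merge ({1..n} - I) I \<in> measurable (Z \<Otimes>\<^sub>M Y) (Pi\<^sub>M (({1..n} - I) \<union> I) (\<lambda>i. borel_of (X i)))"
    unfolding prodM_def by (rule measurable_merge)
  moreover have "({1..n} - I) \<union> I = {1..n}" using I_subset by auto
  moreover have "measurable (Z \<Otimes>\<^sub>M Y) \<mu> = measurable (Z \<Otimes>\<^sub>M Y) (prodM X {1..n})"
    by (rule measurable_cong_sets[OF refl sets_eq])
  ultimately show ?thesis unfolding prodM_def by simp
qed

lemma kernel_measurable: "m \<in> measurable Z (subprob_algebra Y)"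
  using is_disintegration unfolding is_disintegration_def by blast

lemma resample_measurable: "resample \<in> measurable \<mu> (subprob_algebra Y)"
  using measurable_comp[OF xbar_measurable kernel_measurable] by (simp add: comp_def)

lemma xbar_in_space: "x \<in> space \<mu> \<Longrightarrow> xbar n I x \<in> space Z"
  using measurable_space[OF xbar_measurable] .

lemma prob_space_resample: "x \<in> space \<mu> \<Longrightarrow> prob_space (resample x)"
  using is_disintegration xbar_in_space unfolding is_disintegration_def by blast

lemma sets_resample: "x \<in> space \<mu> \<Longrightarrow> sets (resample x) = sets Y"
  using subprob_measurableD(2)[OF kernel_measurable xbar_in_space] .

lemma space_resample: "x \<in> space \<mu> \<Longrightarrow> space (resample x) = space Y"
  using sets_eq_imp_space_eq[OF sets_resample] .

lemma glue_measurable: "(\<lambda>(x, y). glue n I x y) \<in> measurable (\<mu> \<Otimes>\<^sub>M Y) \<mu>"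
proof -
  have "(\<lambda>w. (xbar n I (fst w), snd w)) \<in> measurable (\<mu> \<Otimes>\<^sub>M Y) (Z \<Otimes>\<^sub>M Y)"
    by (intro measurable_Pair measurable_compose[OF measurable_fst xbar_measurable] measurable_snd)
  from measurable_comp[OF this merge_measurable] show ?thesis
    unfolding glue_def comp_def by (simp add: split_beta')
qed

lemma glue_measurable_snd: "x \<in> space \<mu> \<Longrightarrow> glue n I x \<in> measurable Y \<mu>"
  using measurable_Pair2[OF glue_measurable] by simp

lemma xbar_glue [simp]: "xbar n I (glue n I x y) = xbar n I x"
  by (rule ext) (simp add: xbar_def glue_def merge_def restrict_def)

lemma glue_glue [simp]: "glue n I (glue n I x y) z = glue n I x z"
  by (metis glue_def xbar_glue)

lemma glue_in_space: "x \<in> space \<mu> \<Longrightarrow> y \<in> space (resample x) \<Longrightarrow> glue n I x y \<in> space \<mu>"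
  using measurable_space[OF glue_measurable, of "(x, y)"] by (simp add: space_pair_measure space_resample)

lemma measurable_glue_pair:
  assumes "H \<in> borel_measurable (\<mu> \<Otimes>\<^sub>M \<mu>)"
  shows "(\<lambda>w. H (fst w, glue n I (fst w) (snd w))) \<in> borel_measurable (\<mu> \<Otimes>\<^sub>M Y)"
    and "(\<lambda>w. H (glue n I (fst w) (snd w), fst w)) \<in> borel_measurable (\<mu> \<Otimes>\<^sub>M Y)"
proof -
  have [measurable]: "(\<lambda>w. glue n I (fst w) (snd w)) \<in> measurable (\<mu> \<Otimes>\<^sub>M Y) \<mu>"
    using glue_measurable by (simp add: split_beta')
  note [measurable] = assms
  show "(\<lambda>w. H (fst w, glue n I (fst w) (snd w))) \<in> borel_measurable (\<mu> \<Otimes>\<^sub>M Y)"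
    "(\<lambda>w. H (glue n I (fst w) (snd w), fst w)) \<in> borel_measurable (\<mu> \<Otimes>\<^sub>M Y)"
    by measurable
qed

lemma measurable_glue_pair_resample:
  assumes H[measurable]: "H \<in> borel_measurable (\<mu> \<Otimes>\<^sub>M \<mu>)" and x: "x \<in> space \<mu>"
  shows "(\<lambda>w. H (glue n I x (fst w), glue n I x (snd w))) \<in> borel_measurable (resample x \<Otimes>\<^sub>M resample x)"
proof -
  note [measurable] = glue_measurable_snd[OF x]
  have "(\<lambda>w. H (glue n I x (fst w), glue n I x (snd w))) \<in> borel_measurable (Y \<Otimes>\<^sub>M Y)"
    by measurable
  then show ?thesis
    by (simp add: measurable_cong_sets[OF sets_pair_measure_cong[OF sets_resample[OF x] sets_resample[OF x]] refl])
qed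

lemma nn_integral_resample_measurable:
  assumes "(\<lambda>(x, y). H x y) \<in> borel_measurable (\<mu> \<Otimes>\<^sub>M Y)"
  shows "(\<lambda>x. \<integral>\<^sup>+y. H x y \<partial>resample x) \<in> borel_measurable \<mu>"
  using nn_integral_measurable_subprob_algebra2[OF assms resample_measurable] .

lemma nn_integral_disintegration:
  assumes g: "g \<in> borel_measurable \<mu>"
  shows "(\<integral>\<^sup>+x. g x \<partial>\<mu>) = (\<integral>\<^sup>+x. (\<integral>\<^sup>+y. g (glue n I x y) \<partial>resample x) \<partial>\<mu>)"
proof -
  have "(\<lambda>(z, y). g (merge ({1..n} - I) I (z, y))) \<in> borel_measurable (Z \<Otimes>\<^sub>M Y)"
    using measurable_comp[OF merge_measurable g] by (simp add: comp_def split_beta')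
  then have "(\<lambda>z. \<integral>\<^sup>+y. g (merge ({1..n} - I) I (z, y)) \<partial>m z) \<in> borel_measurable Z"
    by (rule nn_integral_measurable_subprob_algebra2[OF _ kernel_measurable])
  moreover have "(\<integral>\<^sup>+x. g x \<partial>\<mu>) = (\<integral>\<^sup>+z. (\<integral>\<^sup>+y. g (merge ({1..n} - I) I (z, y)) \<partial>m z) \<partial>marg X n \<mu> I)"
    using is_disintegration g unfolding is_disintegration_def by blast
  ultimately show ?thesis
    unfolding marg_def glue_def by (subst (asm) nn_integral_distr[OF xbar_measurable]) simp_all
qed

text \<open>Both sides integrate H over two independent resamples of the same coordinates outside I:
  disintegrate once more and exchange the two resamples by Fubini.\<close>
lemma nn_integral_resample_swap:
  assumes H: "H \<in> borel_measurable (\<mu> \<Otimes>\<^sub>M \<mu>)"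
  shows "(\<integral>\<^sup>+x. (\<integral>\<^sup>+y. H (x, glue n I x y) \<partial>resample x) \<partial>\<mu>) =
         (\<integral>\<^sup>+x. (\<integral>\<^sup>+y. H (glue n I x y, x) \<partial>resample x) \<partial>\<mu>)"
proof -
  have "(\<lambda>x. \<integral>\<^sup>+y. H (x, glue n I x y) \<partial>resample x) \<in> borel_measurable \<mu>"
       "(\<lambda>x. \<integral>\<^sup>+y. H (glue n I x y, x) \<partial>resample x) \<in> borel_measurable \<mu>"
    using nn_integral_resample_measurable measurable_glue_pair[OF H] by (simp_all add: split_beta')
  note disintegrate = this[THEN nn_integral_disintegration]
  have "(\<integral>\<^sup>+x. (\<integral>\<^sup>+y. H (x, glue n I x y) \<partial>resample x) \<partial>\<mu>) =
        (\<integral>\<^sup>+x. (\<integral>\<^sup>+y'. (\<integral>\<^sup>+y. H (glue n I x y', glue n I x y) \<partial>resample x) \<partial>resample x) \<partial>\<mu>)"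
    using disintegrate(1) by simp
  also have "\<dots> = (\<integral>\<^sup>+x. (\<integral>\<^sup>+y'. (\<integral>\<^sup>+y. H (glue n I x y, glue n I x y') \<partial>resample x) \<partial>resample x) \<partial>\<mu>)"
  proof (rule nn_integral_cong)
    fix x assume x: "x \<in> space \<mu>"
    interpret pair_sigma_finite "resample x" "resample x"
      using prob_space_resample[OF x] by (simp add: pair_sigma_finite_def prob_space_imp_sigma_finite)
    show "(\<integral>\<^sup>+y'. (\<integral>\<^sup>+y. H (glue n I x y', glue n I x y) \<partial>resample x) \<partial>resample x) =
          (\<integral>\<^sup>+y'. (\<integral>\<^sup>+y. H (glue n I x y, glue n I x y') \<partial>resample x) \<partial>resample x)"
      using Fubini'[of "\<lambda>y' y. H (glue n I x y', glue n I x y)"] measurable_glue_pair_resample[OF H x]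
      by (simp add: split_beta')
  qed
  also have "\<dots> = (\<integral>\<^sup>+x. (\<integral>\<^sup>+y. H (glue n I x y, x) \<partial>resample x) \<partial>\<mu>)"
    using disintegrate(2) by simp
  finally show ?thesis .
qed

lemma AE_resample:
  assumes "AE x in \<mu>. P x"
  shows "AE x in \<mu>. AE y in resample x. P (glue n I x y)"
proof -
  obtain N where N: "N \<in> sets \<mu>" "emeasure \<mu> N = 0" "{x \<in> space \<mu>. \<not> P x} \<subseteq> N"
    using assms unfolding eventually_ae_filter by blast
  have "(\<lambda>w. indicator N (snd w) :: ennreal) \<in> borel_measurable (\<mu> \<Otimes>\<^sub>M \<mu>)"
    using N(1) by measurable
  from measurable_glue_pair(1)[OF this]
  have meas: "(\<lambda>x. \<integral>\<^sup>+y. indicator N (glue n I x y) \<partial>resample x) \<in> borel_measurable \<mu>"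
    using nn_integral_resample_measurable by (simp add: split_beta')
  have "(\<integral>\<^sup>+x. (\<integral>\<^sup>+y. indicator N (glue n I x y) \<partial>resample x) \<partial>\<mu>) = 0"
    using nn_integral_disintegration[of "indicator N"] N by simp
  then have "AE x in \<mu>. (\<integral>\<^sup>+y. indicator N (glue n I x y) \<partial>resample x) = 0"
    by (simp add: nn_integral_0_iff_AE[OF meas])
  moreover have "AE x in \<mu>. (\<integral>\<^sup>+y. indicator N (glue n I x y) \<partial>resample x) = 0 \<longrightarrow>
      (AE y in resample x. P (glue n I x y))"
  proof (rule AE_I2, rule impI)
    fix x assume x: "x \<in> space \<mu>" and null: "(\<integral>\<^sup>+y. indicator N (glue n I x y) \<partial>resample x) = 0"
    have "(\<lambda>y. indicator N (glue n I x y) :: ennreal) \<in> borel_measurable (resample x)"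
      using N(1) glue_measurable_snd[OF x]
      by (simp add: measurable_cong_sets[OF sets_resample[OF x] refl])
    then have "AE y in resample x. glue n I x y \<notin> N"
      using null by (simp add: nn_integral_0_iff_AE indicator_eq_0_iff)
    moreover have "AE y in resample x. glue n I x y \<notin> N \<longrightarrow> P (glue n I x y)"
      using N(3) glue_in_space[OF x] by (auto intro!: AE_I2)
    ultimately show "AE y in resample x. P (glue n I x y)"
      by (rule AE_mp)
  qed
  ultimately show ?thesis by (rule AE_mp)
qed

lemma measurable_resample_slice:
  assumes "(\<lambda>w. F (fst w) (snd w)) \<in> borel_measurable (\<mu> \<Otimes>\<^sub>M Y)" and x: "x \<in> space \<mu>"
  shows "F x \<in> borel_measurable (resample x)"
  using measurable_Pair2[OF assms] by (simp add: measurable_cong_sets[OF sets_resample[OF x] refl])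

lemma integral_resample_measurable:
  fixes F :: "(nat \<Rightarrow> 'a) \<Rightarrow> (nat \<Rightarrow> 'a) \<Rightarrow> real"
  assumes F: "(\<lambda>w. F (fst w) (snd w)) \<in> borel_measurable (\<mu> \<Otimes>\<^sub>M Y)" and nonneg: "\<And>x y. 0 \<le> F x y"
  shows "(\<lambda>x. \<integral>y. F x y \<partial>resample x) \<in> borel_measurable \<mu>"
proof -
  have "(\<lambda>x. \<integral>\<^sup>+y. ennreal (F x y) \<partial>resample x) \<in> borel_measurable \<mu>"
    using F by (intro nn_integral_resample_measurable) (simp add: split_beta')
  then have "(\<lambda>x. enn2real (\<integral>\<^sup>+y. ennreal (F x y) \<partial>resample x)) \<in> borel_measurable \<mu>"
    by measurable
  moreover have "(\<integral>y. F x y \<partial>resample x) = enn2real (\<integral>\<^sup>+y. ennreal (F x y) \<partial>resample x)"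
    if "x \<in> space \<mu>" for x
    using integral_eq_nn_integral[OF measurable_resample_slice[OF F that]] nonneg by simp
  ultimately show ?thesis by (simp cong: measurable_cong)
qed

lemma integrable_resample:
  fixes F :: "(nat \<Rightarrow> 'a) \<Rightarrow> (nat \<Rightarrow> 'a) \<Rightarrow> real"
  assumes F: "(\<lambda>w. F (fst w) (snd w)) \<in> borel_measurable (\<mu> \<Otimes>\<^sub>M Y)" and x: "x \<in> space \<mu>"
    and bound: "\<And>x y. \<bar>F x y\<bar> \<le> B"
  shows "integrable (resample x) (F x)"
  using prob_space.integrable_bounded[OF prob_space_resample[OF x] measurable_resample_slice[OF F x]] bound .

lemma abs_integral_resample_le:
  fixes F :: "(nat \<Rightarrow> 'a) \<Rightarrow> (nat \<Rightarrow> 'a) \<Rightarrow> real"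
  assumes F: "(\<lambda>w. F (fst w) (snd w)) \<in> borel_measurable (\<mu> \<Otimes>\<^sub>M Y)" and x: "x \<in> space \<mu>"
    and bound: "\<And>x y. \<bar>F x y\<bar> \<le> B"
  shows "\<bar>\<integral>y. F x y \<partial>resample x\<bar> \<le> B"
  using prob_space.abs_integral_le_const[OF prob_space_resample[OF x] integrable_resample[OF F x bound]] bound
  by simp

definition resample_integral :: "((nat \<Rightarrow> 'a) \<times> (nat \<Rightarrow> 'a) \<Rightarrow> real) \<Rightarrow> real" where
  "resample_integral H = (\<integral>x. (\<integral>y. H (x, glue n I x y) \<partial>resample x) \<partial>\<mu>)"

lemma resample_integral_cmult: "resample_integral (\<lambda>u. c * H u) = c * resample_integral H"
  unfolding resample_integral_def by simp

context
  fixes H :: "(nat \<Rightarrow> 'a) \<times> (nat \<Rightarrow> 'a) \<Rightarrow> real" and B :: real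
  assumes H[measurable]: "H \<in> borel_measurable (\<mu> \<Otimes>\<^sub>M \<mu>)"
    and H_nonneg: "\<And>u. 0 \<le> H u" and H_le: "\<And>u. H u \<le> B"
begin

lemma abs_integrand_le: "\<bar>H u\<bar> \<le> B"
  using H_nonneg[of u] H_le[of u] by simp

lemma integrable_resample_integrand:
  "x \<in> space \<mu> \<Longrightarrow> integrable (resample x) (\<lambda>y. H (x, glue n I x y))"
  using integrable_resample[of "\<lambda>x y. H (x, glue n I x y)" x B] measurable_glue_pair(1)[OF H] abs_integrand_le
  by simp

lemma integrable_resample_integral:
  "integrable \<mu> (\<lambda>x. \<integral>y. H (x, glue n I x y) \<partial>resample x)"
proof (rule integrable_bounded)
  show "(\<lambda>x. \<integral>y. H (x, glue n I x y) \<partial>resample x) \<in> borel_measurable \<mu>"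
    using integral_resample_measurable[of "\<lambda>x y. H (x, glue n I x y)"] measurable_glue_pair(1)[OF H] H_nonneg
    by simp
  show "\<bar>\<integral>y. H (x, glue n I x y) \<partial>resample x\<bar> \<le> B" if "x \<in> space \<mu>" for x
    using abs_integral_resample_le[of "\<lambda>x y. H (x, glue n I x y)" x B] that measurable_glue_pair(1)[OF H]
      abs_integrand_le
    by simp
qed

lemma ennreal_resample_integral:
  "ennreal (resample_integral H) = (\<integral>\<^sup>+x. (\<integral>\<^sup>+y. ennreal (H (x, glue n I x y)) \<partial>resample x) \<partial>\<mu>)"
proof -
  have "ennreal (resample_integral H) = (\<integral>\<^sup>+x. ennreal (\<integral>y. H (x, glue n I x y) \<partial>resample x) \<partial>\<mu>)"
    unfolding resample_integral_def using integrable_resample_integral H_nonneg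
    by (intro nn_integral_eq_integral[symmetric]) (auto intro!: integral_nonneg_AE)
  also have "\<dots> = (\<integral>\<^sup>+x. (\<integral>\<^sup>+y. ennreal (H (x, glue n I x y)) \<partial>resample x) \<partial>\<mu>)"
    using integrable_resample_integrand H_nonneg
    by (intro nn_integral_cong nn_integral_eq_integral[symmetric]) auto
  finally show ?thesis .
qed

end

lemma resample_integral_swap:
  assumes H: "H \<in> borel_measurable (\<mu> \<Otimes>\<^sub>M \<mu>)" and H_nonneg: "\<And>u. 0 \<le> H u" and H_le: "\<And>u. H u \<le> B"
  shows "resample_integral (\<lambda>(a, b). H (b, a)) = resample_integral H"
proof -
  have H': "(\<lambda>(a, b). H (b, a)) \<in> borel_measurable (\<mu> \<Otimes>\<^sub>M \<mu>)"
    using H by measurable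
  have H'_nonneg: "0 \<le> (\<lambda>(a, b). H (b, a)) u" and H'_le: "(\<lambda>(a, b). H (b, a)) u \<le> B" for u
    using H_nonneg H_le by (simp_all add: split_beta)
  have "ennreal (resample_integral (\<lambda>(a, b). H (b, a))) = ennreal (resample_integral H)"
    using nn_integral_resample_swap[of "\<lambda>u. ennreal (H u)"] H
    unfolding ennreal_resample_integral[OF H' H'_nonneg H'_le] ennreal_resample_integral[OF H H_nonneg H_le]
    by simp
  moreover have "0 \<le> resample_integral H" "0 \<le> resample_integral (\<lambda>(a, b). H (b, a))"
    unfolding resample_integral_def using H_nonneg by (auto intro!: integral_nonneg_AE simp: split_beta)
  ultimately show ?thesis by simp
qed

lemma resample_integral_add:
  assumes "H1 \<in> borel_measurable (\<mu> \<Otimes>\<^sub>M \<mu>)" "\<And>u. 0 \<le> H1 u" "\<And>u. H1 u \<le> B1"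
    and "H2 \<in> borel_measurable (\<mu> \<Otimes>\<^sub>M \<mu>)" "\<And>u. 0 \<le> H2 u" "\<And>u. H2 u \<le> B2"
  shows "resample_integral (\<lambda>u. H1 u + H2 u) = resample_integral H1 + resample_integral H2"
proof -
  have inner: "(\<integral>y. H1 (x, glue n I x y) + H2 (x, glue n I x y) \<partial>resample x) =
        (\<integral>y. H1 (x, glue n I x y) \<partial>resample x) + (\<integral>y. H2 (x, glue n I x y) \<partial>resample x)"
    if "x \<in> space \<mu>" for x
    using integrable_resample_integrand[OF assms(1-3) that] integrable_resample_integrand[OF assms(4-6) that]
    by simp
  have "resample_integral (\<lambda>u. H1 u + H2 u) =
      (\<integral>x. (\<integral>y. H1 (x, glue n I x y) \<partial>resample x) + (\<integral>y. H2 (x, glue n I x y) \<partial>resample x) \<partial>\<mu>)"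
    unfolding resample_integral_def by (rule Bochner_Integration.integral_cong[OF refl inner])
  then show ?thesis
    unfolding resample_integral_def
    using integrable_resample_integral[OF assms(1-3)] integrable_resample_integral[OF assms(4-6)]
    by simp
qed

lemma resample_integral_mono:
  assumes "H1 \<in> borel_measurable (\<mu> \<Otimes>\<^sub>M \<mu>)" "\<And>u. 0 \<le> H1 u"
    and "H2 \<in> borel_measurable (\<mu> \<Otimes>\<^sub>M \<mu>)" "\<And>u. H2 u \<le> B"
    and le: "\<And>u. H1 u \<le> H2 u"
  shows "resample_integral H1 \<le> resample_integral H2"
proof -
  have H1_le: "H1 u \<le> B" and H2_nonneg: "0 \<le> H2 u" for u
    using assms(2)[of u] assms(4)[of u] le[of u] by auto
  show ?thesis
    unfolding resample_integral_def
    using integrable_resample_integral[OF assms(1,2) H1_le] integrable_resample_integral[OF assms(3) H2_nonneg assms(4)]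
      integrable_resample_integrand[OF assms(1,2) H1_le] integrable_resample_integrand[OF assms(3) H2_nonneg assms(4)]
    by (intro integral_mono integral_mono le) auto
qed

lemma partialI_sq: "(partialI n I m u x)\<^sup>2 = 1/2 * (\<integral>y. (u x - u (glue n I x y))\<^sup>2 \<partial>resample x)"
  unfolding partialI_def by (simp add: integral_nonneg_AE)

lemma partialI_nonneg: "0 \<le> partialI n I m u x"
  unfolding partialI_def by simp

lemma integral_weighted_partialI_sq:
  "(\<integral>x. v x * (partialI n I m u x)\<^sup>2 \<partial>\<mu>) = 1/2 * resample_integral (\<lambda>(a, b). v a * (u a - u b)\<^sup>2)"
  unfolding partialI_sq resample_integral_def by (simp add: ac_simps)

lemma partialI_measurable:
  assumes u[measurable]: "u \<in> borel_measurable \<mu>"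
  shows "partialI n I m u \<in> borel_measurable \<mu>"
proof -
  have "(\<lambda>(a, b). (u a - u b)\<^sup>2) \<in> borel_measurable (\<mu> \<Otimes>\<^sub>M \<mu>)" by measurable
  from measurable_glue_pair(1)[OF this]
  have [measurable]: "(\<lambda>x. \<integral>y. (u x - u (glue n I x y))\<^sup>2 \<partial>resample x) \<in> borel_measurable \<mu>"
    by (intro integral_resample_measurable) simp_all
  show ?thesis unfolding partialI_def[abs_def] by measurable
qed

lemma partialI_sq_le:
  assumes u[measurable]: "u \<in> borel_measurable \<mu>" and bound: "\<And>x. \<bar>u x\<bar> \<le> B" and x: "x \<in> space \<mu>"
  shows "(partialI n I m u x)\<^sup>2 \<le> 2 * B\<^sup>2"
proof -
  have "(\<lambda>(a, b). (u a - u b)\<^sup>2) \<in> borel_measurable (\<mu> \<Otimes>\<^sub>M \<mu>)" by measurable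
  from abs_integral_resample_le[OF measurable_glue_pair(1)[OF this] x, of "4 * B\<^sup>2"]
  have "\<bar>\<integral>y. (u x - u (glue n I x y))\<^sup>2 \<partial>resample x\<bar> \<le> 4 * B\<^sup>2"
    using diff_sq_le_of_abs_le bound by simp
  then show ?thesis unfolding partialI_sq by simp
qed

text \<open>Integrate the pointwise bound \<open>abs_powr_half_diff_sq_le\<close>; by the symmetry of resampling
  the weights at the two ends of a pair contribute the same amount.\<close>
lemma integral_partialI_abs_powr_half_le:
  assumes g[measurable]: "g \<in> borel_measurable \<mu>" and bound: "\<And>x. \<bar>g x\<bar> \<le> C" and q: "2 \<le> q"
  shows "(\<integral>x. (partialI n I m (\<lambda>x. \<bar>g x\<bar> powr (q/2)) x)\<^sup>2 \<partial>\<mu>)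
         \<le> q\<^sup>2 / 2 * (\<integral>x. \<bar>g x\<bar> powr (q - 2) * (partialI n I m g x)\<^sup>2 \<partial>\<mu>)"
proof -
  define A where "A = (\<lambda>(a, b). \<bar>g a\<bar> powr (q - 2) * (g a - g b)\<^sup>2)"
  define W where "W = (\<lambda>(a, b). (\<bar>g a\<bar> powr (q/2) - \<bar>g b\<bar> powr (q/2))\<^sup>2)"
  define K where "K = C powr (q - 2) * (4 * C\<^sup>2)"
  have A_meas: "A \<in> borel_measurable (\<mu> \<Otimes>\<^sub>M \<mu>)" and A_swap_meas: "(\<lambda>(a, b). A (b, a)) \<in> borel_measurable (\<mu> \<Otimes>\<^sub>M \<mu>)"
    and W_meas: "W \<in> borel_measurable (\<mu> \<Otimes>\<^sub>M \<mu>)"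
    unfolding A_def W_def by measurable
  have A_le: "A u \<le> K" and A_swap_le: "(\<lambda>(a, b). A (b, a)) u \<le> K" for u
    using diff_sq_le_of_abs_le bound q
    by (auto simp: A_def K_def split_beta power2_commute intro!: mult_mono powr_mono2)
  have A_nonneg: "0 \<le> A u" and A_swap_nonneg: "0 \<le> (\<lambda>(a, b). A (b, a)) u" for u
    unfolding A_def by (simp_all add: split_beta)
  have "(\<integral>x. (partialI n I m (\<lambda>x. \<bar>g x\<bar> powr (q/2)) x)\<^sup>2 \<partial>\<mu>) = 1/2 * resample_integral W"
    using integral_weighted_partialI_sq[of "\<lambda>_. 1"] unfolding W_def by simp
  also have "\<dots> \<le> 1/2 * resample_integral (\<lambda>u. q\<^sup>2 / 4 * (A u + (\<lambda>(a, b). A (b, a)) u))"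
  proof (intro mult_left_mono resample_integral_mono)
    show "W u \<le> q\<^sup>2 / 4 * (A u + (\<lambda>(a, b). A (b, a)) u)" for u
      using abs_powr_half_diff_sq_le[OF q, of "g (fst u)" "g (snd u)"]
      by (simp add: W_def A_def split_beta algebra_simps power2_commute[of "g (snd u)"])
    show "q\<^sup>2 / 4 * (A u + (\<lambda>(a, b). A (b, a)) u) \<le> q\<^sup>2 / 4 * (K + K)" for u
      using A_le A_swap_le by (intro mult_left_mono add_mono) auto
  qed (use A_meas A_swap_meas W_meas in \<open>auto simp: W_def split_beta\<close>)
  also have "\<dots> = q\<^sup>2 / 8 * (resample_integral A + resample_integral (\<lambda>(a, b). A (b, a)))"
    unfolding resample_integral_cmult resample_integral_add[OF A_meas A_nonneg A_le A_swap_meas A_swap_nonneg A_swap_le]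
    by simp
  also have "\<dots> = q\<^sup>2 / 4 * resample_integral A"
    using resample_integral_swap[OF A_meas A_nonneg A_le] by simp
  also have "\<dots> = q\<^sup>2 / 2 * (\<integral>x. \<bar>g x\<bar> powr (q - 2) * (partialI n I m g x)\<^sup>2 \<partial>\<mu>)"
    unfolding integral_weighted_partialI_sq A_def by simp
  finally show ?thesis .
qed

definition oscillation :: "((nat \<Rightarrow> 'a) \<Rightarrow> real) \<Rightarrow> (nat \<Rightarrow> 'a) \<Rightarrow> ereal" where
  "oscillation u x = esssup (resample x \<Otimes>\<^sub>M resample x)
     (\<lambda>w. ereal \<bar>u (glue n I x (fst w)) - u (glue n I x (snd w))\<bar>)"

lemma hI_eq_oscillation: "hI n I m u x = real_of_ereal (oscillation u x) / sqrt 2"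
  unfolding hI_def oscillation_def by (simp add: split_beta')

lemma oscillation_glue [simp]: "oscillation u (glue n I x y) = oscillation u x"
  unfolding oscillation_def by simp

lemma measurable_oscillation_integrand:
  assumes u[measurable]: "u \<in> borel_measurable \<mu>" and x: "x \<in> space \<mu>"
  shows "(\<lambda>w. ereal \<bar>u (glue n I x (fst w)) - u (glue n I x (snd w))\<bar>) \<in> borel_measurable (resample x \<Otimes>\<^sub>M resample x)"
proof -
  have "(\<lambda>(a, b). ereal \<bar>u a - u b\<bar>) \<in> borel_measurable (\<mu> \<Otimes>\<^sub>M \<mu>)" by measurable
  from measurable_glue_pair_resample[OF this x] show ?thesis by simp
qed

lemma oscillation_measurable:
  assumes u[measurable]: "u \<in> borel_measurable \<mu>"
  shows "oscillation u \<in> borel_measurable \<mu>"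
  unfolding oscillation_def[abs_def]
proof (rule borel_measurable_esssup_kernel)
  have glue: "(\<lambda>v. glue n I (fst v) (snd v)) \<in> measurable (\<mu> \<Otimes>\<^sub>M Y) \<mu>"
    using glue_measurable by (simp add: split_beta')
  have "(\<lambda>v. (fst v, fst (snd v))) \<in> measurable (\<mu> \<Otimes>\<^sub>M (Y \<Otimes>\<^sub>M Y)) (\<mu> \<Otimes>\<^sub>M Y)"
    by (intro measurable_Pair measurable_fst measurable_compose[OF measurable_snd measurable_fst])
  from measurable_comp[OF this glue]
  have glue1: "(\<lambda>v. glue n I (fst v) (fst (snd v))) \<in> measurable (\<mu> \<Otimes>\<^sub>M (Y \<Otimes>\<^sub>M Y)) \<mu>"
    by (simp add: comp_def)
  have "(\<lambda>v. (fst v, snd (snd v))) \<in> measurable (\<mu> \<Otimes>\<^sub>M (Y \<Otimes>\<^sub>M Y)) (\<mu> \<Otimes>\<^sub>M Y)"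
    by (intro measurable_Pair measurable_fst measurable_compose[OF measurable_snd measurable_snd])
  from measurable_comp[OF this glue]
  have glue2: "(\<lambda>v. glue n I (fst v) (snd (snd v))) \<in> measurable (\<mu> \<Otimes>\<^sub>M (Y \<Otimes>\<^sub>M Y)) \<mu>"
    by (simp add: comp_def)
  note [measurable] = measurable_compose[OF glue1 u] measurable_compose[OF glue2 u]
  have "(\<lambda>v. ereal \<bar>u (glue n I (fst v) (fst (snd v))) - u (glue n I (fst v) (snd (snd v)))\<bar>)
      \<in> borel_measurable (\<mu> \<Otimes>\<^sub>M (Y \<Otimes>\<^sub>M Y))"
    by measurable
  then show "(\<lambda>(x, w). ereal \<bar>u (glue n I x (fst w)) - u (glue n I x (snd w))\<bar>) \<in> borel_measurable (\<mu> \<Otimes>\<^sub>M (Y \<Otimes>\<^sub>M Y))"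
    by (simp add: split_beta')
  show "(\<lambda>x. resample x \<Otimes>\<^sub>M resample x) \<in> measurable \<mu> (subprob_algebra (Y \<Otimes>\<^sub>M Y))"
    by (rule measurable_pair_measure[OF resample_measurable resample_measurable])
qed

lemma hI_measurable:
  assumes "u \<in> borel_measurable \<mu>"
  shows "hI n I m u \<in> borel_measurable \<mu>"
proof -
  note [measurable] = oscillation_measurable[OF assms]
  show ?thesis unfolding hI_eq_oscillation[abs_def] by measurable
qed

lemma prob_space_resample_pair: "x \<in> space \<mu> \<Longrightarrow> prob_space (resample x \<Otimes>\<^sub>M resample x)"
  using prob_space_resample
  by (simp add: pair_prob_space_def pair_sigma_finite_def prob_space_imp_sigma_finite prob_space_pair)

lemma oscillation_bounds:
  assumes u: "u \<in> borel_measurable \<mu>" and bound: "\<And>x. \<bar>u x\<bar> \<le> B" and x: "x \<in> space \<mu>"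
  shows "0 \<le> oscillation u x" "oscillation u x \<le> ereal (2 * B)"
proof -
  interpret pair: prob_space "resample x \<Otimes>\<^sub>M resample x" by (rule prob_space_resample_pair[OF x])
  note meas = measurable_oscillation_integrand[OF u x]
  show "oscillation u x \<le> ereal (2 * B)"
    unfolding oscillation_def
    by (intro esssup_I[OF meas] AE_I2) (simp add: abs_diff_le_of_abs_le bound)
  have "AE w in resample x \<Otimes>\<^sub>M resample x.
      ereal \<bar>u (glue n I x (fst w)) - u (glue n I x (snd w))\<bar> \<le> oscillation u x"
    unfolding oscillation_def by (rule esssup_AE)
  then have "AE w in resample x \<Otimes>\<^sub>M resample x. 0 \<le> oscillation u x"
    by (elim eventually_mono) (erule order_trans[rotated], simp)
  then show "0 \<le> oscillation u x" by simp
qed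

lemma abs_hI_le:
  assumes u: "u \<in> borel_measurable \<mu>" and bound: "\<And>x. \<bar>u x\<bar> \<le> B" and x: "x \<in> space \<mu>"
  shows "\<bar>hI n I m u x\<bar> \<le> 2 * B"
proof -
  obtain e where e: "oscillation u x = ereal e" "0 \<le> e" "e \<le> 2 * B"
    using oscillation_bounds[OF assms] by (cases "oscillation u x") auto
  have "e / sqrt 2 \<le> e / 1" using e(2) by (intro divide_left_mono) auto
  then show ?thesis using e unfolding hI_eq_oscillation by simp
qed

text \<open>The pair \<open>(x, glue n I x y)\<close> is distributed like a pair of independent resamples of one
  point, so a property of almost all such pairs holds for almost all x and almost all resamples of x.\<close>
lemma AE_resample_of_AE_resample_pair:
  assumes P[measurable]: "Measurable.pred (\<mu> \<Otimes>\<^sub>M \<mu>) (\<lambda>p. P (fst p) (snd p))"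
    and pairs: "\<And>x. x \<in> space \<mu> \<Longrightarrow>
      AE w in resample x \<Otimes>\<^sub>M resample x. P (glue n I x (fst w)) (glue n I x (snd w))"
  shows "AE x in \<mu>. AE y in resample x. P x (glue n I x y)"
proof -
  define bad :: "(nat \<Rightarrow> 'a) \<times> (nat \<Rightarrow> 'a) \<Rightarrow> ennreal"
    where "bad = indicator {p. \<not> P (fst p) (snd p)}"
  define \<Psi> where "\<Psi> x = (\<integral>\<^sup>+y. bad (x, glue n I x y) \<partial>resample x)" for x
  have "bad \<in> borel_measurable (\<mu> \<Otimes>\<^sub>M \<mu>)"
    unfolding bad_def by measurable
  note bad_meas = measurable_glue_pair(1)[OF this] measurable_glue_pair_resample[OF this]
  have \<Psi>_meas: "\<Psi> \<in> borel_measurable \<mu>"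
    unfolding \<Psi>_def using nn_integral_resample_measurable bad_meas(1) by (simp add: split_beta')
  have "(\<integral>\<^sup>+y'. \<Psi> (glue n I x y') \<partial>resample x) = 0" if x: "x \<in> space \<mu>" for x
  proof -
    interpret resample: prob_space "resample x" by (rule prob_space_resample[OF x])
    have "(\<integral>\<^sup>+y'. \<Psi> (glue n I x y') \<partial>resample x)
        = (\<integral>\<^sup>+w. bad (glue n I x (fst w), glue n I x (snd w)) \<partial>resample x \<Otimes>\<^sub>M resample x)"
      unfolding \<Psi>_def using resample.nn_integral_fst[OF bad_meas(2)[OF x]] by simp
    also have "\<dots> = 0"
      using pairs[OF x] by (subst nn_integral_0_iff_AE[OF bad_meas(2)[OF x]]) (auto simp: bad_def elim!: eventually_mono)
    finally show ?thesis .
  qed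
  then have "(\<integral>\<^sup>+x. \<Psi> x \<partial>\<mu>) = 0"
    by (simp add: nn_integral_disintegration[OF \<Psi>_meas] cong: nn_integral_cong)
  then have "AE x in \<mu>. \<Psi> x = 0"
    by (simp add: nn_integral_0_iff_AE[OF \<Psi>_meas])
  moreover have "AE x in \<mu>. \<Psi> x = 0 \<longrightarrow> (AE y in resample x. P x (glue n I x y))"
  proof (rule AE_I2, rule impI)
    fix x assume x: "x \<in> space \<mu>" and "\<Psi> x = 0"
    then have "AE y in resample x. bad (x, glue n I x y) = 0"
      unfolding \<Psi>_def using measurable_resample_slice[OF bad_meas(1) x]
      by (simp add: nn_integral_0_iff_AE)
    then show "AE y in resample x. P x (glue n I x y)"
      by (rule AE_mp) (auto intro!: AE_I2 simp: bad_def indicator_eq_0_iff)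
  qed
  ultimately show ?thesis by (rule AE_mp)
qed

lemma AE_abs_diff_le_oscillation:
  assumes u[measurable]: "u \<in> borel_measurable \<mu>"
  shows "AE x in \<mu>. AE y in resample x. ereal \<bar>u x - u (glue n I x y)\<bar> \<le> oscillation u x"
proof (rule AE_resample_of_AE_resample_pair)
  note [measurable] = oscillation_measurable[OF u]
  show "Measurable.pred (\<mu> \<Otimes>\<^sub>M \<mu>) (\<lambda>p. ereal \<bar>u (fst p) - u (snd p)\<bar> \<le> oscillation u (fst p))"
    by measurable
  show "AE w in resample x \<Otimes>\<^sub>M resample x.
      ereal \<bar>u (glue n I x (fst w)) - u (glue n I x (snd w))\<bar> \<le> oscillation u (glue n I x (fst w))" for x
    unfolding oscillation_glue unfolding oscillation_def by (rule esssup_AE)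
qed

lemma partialI_le_hI:
  assumes u[measurable]: "u \<in> borel_measurable \<mu>" and bound: "\<And>x. \<bar>u x\<bar> \<le> B"
  shows "AE x in \<mu>. partialI n I m u x \<le> hI n I m u x"
  using AE_abs_diff_le_oscillation[OF u]
proof (rule AE_mp, intro AE_I2 impI)
  fix x assume x: "x \<in> space \<mu>"
    and close: "AE y in resample x. ereal \<bar>u x - u (glue n I x y)\<bar> \<le> oscillation u x"
  interpret resample: prob_space "resample x" by (rule prob_space_resample[OF x])
  obtain e where e: "oscillation u x = ereal e" "0 \<le> e"
    using oscillation_bounds[OF u bound x] by (cases "oscillation u x") auto
  have "(\<lambda>(a, b). (u a - u b)\<^sup>2) \<in> borel_measurable (\<mu> \<Otimes>\<^sub>M \<mu>)" by measurable
  note diff_meas = measurable_glue_pair(1)[OF this]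
  have "(\<integral>y. (u x - u (glue n I x y))\<^sup>2 \<partial>resample x) \<le> e\<^sup>2"
  proof (rule resample.integral_le_const)
    show "integrable (resample x) (\<lambda>y. (u x - u (glue n I x y))\<^sup>2)"
      using integrable_resample[of "\<lambda>x y. (u x - u (glue n I x y))\<^sup>2" x "4 * B\<^sup>2"] diff_meas x
        diff_sq_le_of_abs_le[OF bound bound]
      by simp
    show "AE y in resample x. (u x - u (glue n I x y))\<^sup>2 \<le> e\<^sup>2"
      using close by (rule AE_mp) (use e in \<open>auto intro!: AE_I2 power2_le_iff_abs_le[THEN iffD2]\<close>)
  qed
  then have "(partialI n I m u x)\<^sup>2 \<le> (hI n I m u x)\<^sup>2"
    unfolding partialI_sq hI_eq_oscillation e by (simp add: power_divide)
  then show "partialI n I m u x \<le> hI n I m u x"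
    by (rule power2_le_imp_le) (simp add: hI_eq_oscillation e)
qed

lemma AE_partialI_cong:
  assumes u: "u \<in> borel_measurable \<mu>" and v: "v \<in> borel_measurable \<mu>" and eq: "AE x in \<mu>. u x = v x"
  shows "AE x in \<mu>. partialI n I m u x = partialI n I m v x"
proof -
  have "AE x in \<mu>. u x = v x \<and> (AE y in resample x. u (glue n I x y) = v (glue n I x y))"
    using eq AE_resample[OF eq] by eventually_elim simp
  then show ?thesis
  proof (rule AE_mp, intro AE_I2 impI)
    fix x assume x: "x \<in> space \<mu>" and "u x = v x \<and> (AE y in resample x. u (glue n I x y) = v (glue n I x y))"
    then have "AE y in resample x. (u x - u (glue n I x y))\<^sup>2 = (v x - v (glue n I x y))\<^sup>2"
      by (auto elim: eventually_mono)
    moreover have "(\<lambda>y. (w x - w (glue n I x y))\<^sup>2) \<in> borel_measurable (resample x)"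
      if "w \<in> borel_measurable \<mu>" for w :: "(nat \<Rightarrow> 'a) \<Rightarrow> real"
    proof -
      note [measurable] = that
      have "(\<lambda>(a, b). (w a - w b)\<^sup>2) \<in> borel_measurable (\<mu> \<Otimes>\<^sub>M \<mu>)" by measurable
      from measurable_resample_slice[OF measurable_glue_pair(1)[OF this] x] show ?thesis by simp
    qed
    ultimately have "(\<integral>y. (u x - u (glue n I x y))\<^sup>2 \<partial>resample x) = (\<integral>y. (v x - v (glue n I x y))\<^sup>2 \<partial>resample x)"
      using u v by (intro integral_cong_AE) auto
    then show "partialI n I m u x = partialI n I m v x"
      unfolding partialI_def by simp
  qed
qed

lemma AE_hI_cong:
  assumes u: "u \<in> borel_measurable \<mu>" and v: "v \<in> borel_measurable \<mu>" and eq: "AE x in \<mu>. u x = v x"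
  shows "AE x in \<mu>. hI n I m u x = hI n I m v x"
  using AE_resample[OF eq]
proof (rule AE_mp, intro AE_I2 impI)
  fix x assume x: "x \<in> space \<mu>" and eq_x: "AE y in resample x. u (glue n I x y) = v (glue n I x y)"
  interpret pair_sigma_finite "resample x" "resample x"
    using prob_space_resample[OF x] by (simp add: pair_sigma_finite_def prob_space_imp_sigma_finite)
  note [measurable] = measurable_oscillation_integrand[OF u x] measurable_oscillation_integrand[OF v x]
  have "AE w in resample x \<Otimes>\<^sub>M resample x.
      ereal \<bar>u (glue n I x (fst w)) - u (glue n I x (snd w))\<bar> = ereal \<bar>v (glue n I x (fst w)) - v (glue n I x (snd w))\<bar>"
  proof (rule AE_pair_measure)
    show "AE y in resample x. AE z in resample x.
        ereal \<bar>u (glue n I x (fst (y, z))) - u (glue n I x (snd (y, z)))\<bar> =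
        ereal \<bar>v (glue n I x (fst (y, z))) - v (glue n I x (snd (y, z)))\<bar>"
      using eq_x
    proof eventually_elim
      case (elim y)
      show ?case using eq_x by eventually_elim (simp add: elim)
    qed
  qed measurable
  then have "oscillation u x = oscillation v x"
    unfolding oscillation_def by (rule esssup_AE_cong[rotated 2]) measurable
  then show "hI n I m u x = hI n I m v x" unfolding hI_eq_oscillation by simp
qed

end

section \<open>Gradients over a family of blocks\<close>

locale resampling_family = prob_space \<mu> for \<mu> :: "(nat \<Rightarrow> 'a) measure" +
  fixes X :: "nat \<Rightarrow> 'a topology" and n :: nat and \<I> :: "nat set set"
    and m :: "nat set \<Rightarrow> (nat \<Rightarrow> 'a) \<Rightarrow> (nat \<Rightarrow> 'a) measure"
  assumes sets_eq: "sets \<mu> = sets (prodM X {1..n})"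
    and blocks_subset: "\<I> \<subseteq> Pow {1..n}"
    and is_disintegration: "\<forall>I\<in>\<I>. is_disintegration X n \<mu> I (m I)"
begin

lemma disintegration: "I \<in> \<I> \<Longrightarrow> disintegration \<mu> X n I (m I)"
  using prob_space_axioms sets_eq blocks_subset is_disintegration
  unfolding disintegration_def disintegration_axioms_def by auto

lemma finite_blocks: "finite \<I>"
  using blocks_subset by (rule finite_subset) simp

lemma grad_norm_sq: "(grad_norm n \<I> m u x)\<^sup>2 = (\<Sum>I\<in>\<I>. (partialI n I (m I) u x)\<^sup>2)"
  unfolding grad_norm_def by (simp add: sum_nonneg)

lemma grad_norm_nonneg: "0 \<le> grad_norm n \<I> m u x"
  unfolding grad_norm_def by (simp add: sum_nonneg)

lemma h_norm_nonneg: "0 \<le> h_norm n \<I> m u x"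
  unfolding h_norm_def by (simp add: sum_nonneg)

lemma grad_norm_measurable:
  assumes "u \<in> borel_measurable \<mu>"
  shows "grad_norm n \<I> m u \<in> borel_measurable \<mu>"
proof -
  have [measurable]: "I \<in> \<I> \<Longrightarrow> partialI n I (m I) u \<in> borel_measurable \<mu>" for I
    using disintegration.partialI_measurable[OF disintegration assms] .
  show ?thesis unfolding grad_norm_def[abs_def] by measurable
qed

lemma h_norm_measurable:
  assumes "u \<in> borel_measurable \<mu>"
  shows "h_norm n \<I> m u \<in> borel_measurable \<mu>"
proof -
  have [measurable]: "I \<in> \<I> \<Longrightarrow> hI n I (m I) u \<in> borel_measurable \<mu>" for I
    using disintegration.hI_measurable[OF disintegration assms] .
  show ?thesis unfolding h_norm_def[abs_def] by measurable
qed

context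
  fixes u :: "(nat \<Rightarrow> 'a) \<Rightarrow> real" and B :: real
  assumes u: "u \<in> borel_measurable \<mu>" and bound: "\<And>x. \<bar>u x\<bar> \<le> B"
begin

lemma grad_norm_le: "x \<in> space \<mu> \<Longrightarrow> grad_norm n \<I> m u x \<le> sqrt (card \<I> * (2 * B\<^sup>2))"
  using disintegration.partialI_sq_le[OF disintegration u bound]
  unfolding grad_norm_def by (auto intro!: real_sqrt_le_mono sum_bounded_above)

lemma h_norm_le:
  assumes x: "x \<in> space \<mu>"
  shows "h_norm n \<I> m u x \<le> sqrt (card \<I> * (2 * B)\<^sup>2)"
proof -
  have "(hI n I (m I) u x)\<^sup>2 \<le> (2 * B)\<^sup>2" if "I \<in> \<I>" for I
    using disintegration.abs_hI_le[OF disintegration[OF that] u bound x]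
    by (metis abs_ge_zero power2_abs power_mono)
  then show ?thesis
    unfolding h_norm_def by (auto intro!: real_sqrt_le_mono sum_bounded_above)
qed

lemma integrable_grad_norm_powr: "0 \<le> p \<Longrightarrow> integrable \<mu> (\<lambda>x. \<bar>grad_norm n \<I> m u x\<bar> powr p)"
  using grad_norm_measurable[OF u] grad_norm_le grad_norm_nonneg
  by (intro integrable_bounded[where B="sqrt (card \<I> * (2 * B\<^sup>2)) powr p"]) (auto intro!: powr_mono2)

lemma integrable_h_norm_powr: "0 \<le> p \<Longrightarrow> integrable \<mu> (\<lambda>x. \<bar>h_norm n \<I> m u x\<bar> powr p)"
  using h_norm_measurable[OF u] h_norm_le h_norm_nonneg
  by (intro integrable_bounded[where B="sqrt (card \<I> * (2 * B)\<^sup>2) powr p"]) (auto intro!: powr_mono2)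

lemma grad_norm_le_h_norm: "AE x in \<mu>. grad_norm n \<I> m u x \<le> h_norm n \<I> m u x"
proof -
  have "AE x in \<mu>. \<forall>I\<in>\<I>. partialI n I (m I) u x \<le> hI n I (m I) u x"
    using disintegration.partialI_le_hI[OF disintegration u bound] by (rule AE_finite_allI[OF finite_blocks])
  then show ?thesis
    unfolding grad_norm_def h_norm_def
    by (elim eventually_mono) (auto intro!: sum_mono power_mono disintegration.partialI_nonneg[OF disintegration])
qed

lemma Lp_norm_grad_norm_le_h_norm:
  assumes "0 < p"
  shows "Lp_norm \<mu> p (grad_norm n \<I> m u) \<le> Lp_norm \<mu> p (h_norm n \<I> m u)"
proof (rule Lp_norm_mono_AE)
  show "AE x in \<mu>. \<bar>grad_norm n \<I> m u x\<bar> \<le> \<bar>h_norm n \<I> m u x\<bar>"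
    using grad_norm_le_h_norm by (rule eventually_mono) (simp add: grad_norm_nonneg h_norm_nonneg)
qed (use assms integrable_grad_norm_powr integrable_h_norm_powr in auto)

lemma integral_grad_norm_abs_powr_half_le:
  assumes q: "2 \<le> q"
  shows "(\<integral>x. (grad_norm n \<I> m (\<lambda>x. \<bar>u x\<bar> powr (q/2)) x)\<^sup>2 \<partial>\<mu>)
      \<le> q\<^sup>2 / 2 * (\<integral>x. \<bar>u x\<bar> powr (q - 2) * (grad_norm n \<I> m u x)\<^sup>2 \<partial>\<mu>)"
proof -
  note [measurable] = u
  have w: "(\<lambda>x. \<bar>u x\<bar> powr (q/2)) \<in> borel_measurable \<mu>" "\<And>x. \<bar>\<bar>u x\<bar> powr (q/2)\<bar> \<le> B powr (q/2)"
    using bound q by (auto intro!: powr_mono2)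
  have weight_le: "\<bar>u x\<bar> powr (q - 2) \<le> B powr (q - 2)" for x
    using bound q by (auto intro!: powr_mono2)
  have "integrable \<mu> (\<lambda>x. (partialI n I (m I) (\<lambda>x. \<bar>u x\<bar> powr (q/2)) x)\<^sup>2)" if "I \<in> \<I>" for I
    using disintegration.partialI_measurable[OF disintegration[OF that] w(1)]
      disintegration.partialI_sq_le[OF disintegration[OF that] w]
    by (intro integrable_bounded[where B="2 * (B powr (q/2))\<^sup>2"]) auto
  moreover have "integrable \<mu> (\<lambda>x. \<bar>u x\<bar> powr (q - 2) * (partialI n I (m I) u x)\<^sup>2)" if "I \<in> \<I>" for I
    using disintegration.partialI_measurable[OF disintegration[OF that] u]
      disintegration.partialI_sq_le[OF disintegration[OF that] u bound] weight_le
    by (intro integrable_bounded[where B="B powr (q - 2) * (2 * B\<^sup>2)"]) (auto simp: abs_mult intro!: mult_mono)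
  ultimately show ?thesis
    unfolding grad_norm_sq
    using disintegration.integral_partialI_abs_powr_half_le[OF disintegration u bound q]
    by (simp add: sum_distrib_left Bochner_Integration.integral_sum sum_mono)
qed

end

lemma AE_grad_norm_cong:
  assumes "u \<in> borel_measurable \<mu>" "v \<in> borel_measurable \<mu>" "AE x in \<mu>. u x = v x"
  shows "AE x in \<mu>. grad_norm n \<I> m u x = grad_norm n \<I> m v x"
proof -
  have "AE x in \<mu>. \<forall>I\<in>\<I>. partialI n I (m I) u x = partialI n I (m I) v x"
    using disintegration.AE_partialI_cong[OF disintegration assms] by (rule AE_finite_allI[OF finite_blocks])
  then show ?thesis unfolding grad_norm_def by (elim eventually_mono) simp
qed

lemma AE_h_norm_cong:
  assumes "u \<in> borel_measurable \<mu>" "v \<in> borel_measurable \<mu>" "AE x in \<mu>. u x = v x"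
  shows "AE x in \<mu>. h_norm n \<I> m u x = h_norm n \<I> m v x"
proof -
  have "AE x in \<mu>. \<forall>I\<in>\<I>. hI n I (m I) u x = hI n I (m I) v x"
    using disintegration.AE_hI_cong[OF disintegration assms] by (rule AE_finite_allI[OF finite_blocks])
  then show ?thesis unfolding h_norm_def by (elim eventually_mono) simp
qed

lemma Linfty_bounded_representative:
  assumes "Linfty \<mu> f"
  obtains g C where "g \<in> borel_measurable \<mu>" "\<And>x. \<bar>g x\<bar> \<le> C"
    "\<And>q. Lp_norm \<mu> q f = Lp_norm \<mu> q g"
    "\<And>q. Lp_norm \<mu> q (grad_norm n \<I> m f) = Lp_norm \<mu> q (grad_norm n \<I> m g)"
    "\<And>q. Lp_norm \<mu> q (h_norm n \<I> m f) = Lp_norm \<mu> q (h_norm n \<I> m g)"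
proof -
  obtain C where f[measurable]: "f \<in> borel_measurable \<mu>" and f_bound: "AE x in \<mu>. \<bar>f x\<bar> \<le> C"
    using assms unfolding Linfty_def by blast
  define g where "g x = (if \<bar>f x\<bar> \<le> C then f x else 0)" for x
  have g[measurable]: "g \<in> borel_measurable \<mu>" unfolding g_def by measurable
  have f_eq_g: "AE x in \<mu>. f x = g x"
    using f_bound by (rule eventually_mono) (simp add: g_def)
  show ?thesis
  proof (rule that[OF g, of "\<bar>C\<bar>"])
    show "\<bar>g x\<bar> \<le> \<bar>C\<bar>" for x unfolding g_def by auto
  qed (intro Lp_norm_cong_AE f g f_eq_g grad_norm_measurable h_norm_measurable
         AE_grad_norm_cong AE_h_norm_cong)+
qed

end

section \<open>Growth of \<open>L\<^sup>p\<close> norms under a log-Sobolev inequality\<close>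

locale log_sobolev = resampling_family +
  fixes \<sigma>2 :: real
  assumes LSI: "LSI n \<mu> \<I> m \<sigma>2" and \<sigma>2_pos: "0 < \<sigma>2"
begin

context
  fixes g :: "(nat \<Rightarrow> 'a) \<Rightarrow> real" and C :: real
  assumes g[measurable]: "g \<in> borel_measurable \<mu>" and bound: "\<And>x. \<bar>g x\<bar> \<le> C"
begin

lemma Ent_abs_powr_le:
  assumes q: "2 < q"
  shows "Ent \<mu> (\<lambda>x. \<bar>g x\<bar> powr q)
    \<le> \<sigma>2 * q\<^sup>2 * Lp_norm \<mu> q g powr (q - 2) * (Lp_norm \<mu> q (grad_norm n \<I> m g))\<^sup>2"
proof -
  define w where "w x = \<bar>g x\<bar> powr (q/2)" for x
  have w_sq: "(w x)\<^sup>2 = \<bar>g x\<bar> powr q" for x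
    unfolding w_def by (simp add: powr_sq_eq)
  have "Linfty \<mu> w"
    unfolding Linfty_def w_def using bound q by (auto intro!: powr_mono2 exI[of _ "C powr (q/2)"])
  then have "Ent \<mu> (\<lambda>x. \<bar>g x\<bar> powr q) \<le> 2 * \<sigma>2 * (\<integral>x. (grad_norm n \<I> m w x)\<^sup>2 \<partial>\<mu>)"
    using LSI unfolding LSI_def w_sq[symmetric] by blast
  also have "\<dots> \<le> 2 * \<sigma>2 * (q\<^sup>2 / 2 * (\<integral>x. \<bar>g x\<bar> powr (q - 2) * (grad_norm n \<I> m g x)\<^sup>2 \<partial>\<mu>))"
    using integral_grad_norm_abs_powr_half_le[OF g bound, of q] q \<sigma>2_pos
    unfolding w_def by (intro mult_left_mono) auto
  also have "\<dots> \<le> 2 * \<sigma>2 * (q\<^sup>2 / 2 * (Lp_norm \<mu> q g powr (q - 2) * (Lp_norm \<mu> q (grad_norm n \<I> m g))\<^sup>2))"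
    using integral_abs_powr_mult_sq_le[OF g _ grad_norm_measurable[OF g] grad_norm_nonneg grad_norm_le[OF g bound] q]
      bound \<sigma>2_pos
    by (intro mult_left_mono) auto
  finally show ?thesis by (simp add: mult_ac)
qed

lemma Lp_norm_sq_derivative_le:
  assumes q: "2 < q"
  shows "2 / q\<^sup>2 * Lp_norm \<mu> q g powr (2 - q) * Ent \<mu> (\<lambda>x. \<bar>g x\<bar> powr q)
    \<le> 2 * \<sigma>2 * (Lp_norm \<mu> q (grad_norm n \<I> m g))\<^sup>2"
proof (cases "Lp_norm \<mu> q g = 0")
  case False
  then have pos: "0 < Lp_norm \<mu> q g" by (simp add: Lp_norm_def less_le)
  have "2 / q\<^sup>2 * Lp_norm \<mu> q g powr (2 - q) * Ent \<mu> (\<lambda>x. \<bar>g x\<bar> powr q)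
      \<le> 2 / q\<^sup>2 * Lp_norm \<mu> q g powr (2 - q) *
        (\<sigma>2 * q\<^sup>2 * Lp_norm \<mu> q g powr (q - 2) * (Lp_norm \<mu> q (grad_norm n \<I> m g))\<^sup>2)"
    using Ent_abs_powr_le[OF q] by (intro mult_left_mono) auto
  also have "\<dots> = 2 * \<sigma>2 * (Lp_norm \<mu> q (grad_norm n \<I> m g))\<^sup>2"
    using pos q by (simp add: powr_add[symmetric] field_simps)
  finally show ?thesis .
qed (use \<sigma>2_pos in simp) \<comment> \<open>a vanishing norm kills the left-hand side, as \<open>0 powr s = 0\<close>\<close>

lemma Lp_norm_sq_diff_le:
  assumes p: "2 \<le> p"
  shows "(Lp_norm \<mu> p g)\<^sup>2 - (Lp_norm \<mu> 2 g)\<^sup>2 \<le> 2 * \<sigma>2 * (p - 2) * (Lp_norm \<mu> p (grad_norm n \<I> m g))\<^sup>2"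
proof (cases "p = 2 \<or> (AE x in \<mu>. g x = 0)")
  case True
  moreover have "Lp_norm \<mu> q g = 0" if "AE x in \<mu>. g x = 0" for q
    using Lp_norm_cong_AE[OF g _ that, of q] by (simp add: Lp_norm_def)
  ultimately show ?thesis
    using p \<sigma>2_pos by auto
next
  case False
  then have p2: "2 < p" and nonzero: "\<not> (AE x in \<mu>. g x = 0)" using p by auto
  define G' where "G' r = 2 / r\<^sup>2 * Lp_norm \<mu> r g powr (2 - r) * Ent \<mu> (\<lambda>x. \<bar>g x\<bar> powr r)" for r
  have "((\<lambda>r. (Lp_norm \<mu> r g)\<^sup>2) has_real_derivative G' r) (at r)" if "2 \<le> r" for r
    unfolding G'_def using that bound by (intro has_real_derivative_Lp_norm_sq[OF g _ _ nonzero]) auto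
  then obtain z where z: "2 < z" "z < p" and mvt: "(Lp_norm \<mu> p g)\<^sup>2 - (Lp_norm \<mu> 2 g)\<^sup>2 = (p - 2) * G' z"
    using MVT2[OF p2] by blast
  have "G' z \<le> 2 * \<sigma>2 * (Lp_norm \<mu> z (grad_norm n \<I> m g))\<^sup>2"
    unfolding G'_def by (rule Lp_norm_sq_derivative_le[OF z(1)])
  also have "\<dots> \<le> 2 * \<sigma>2 * (Lp_norm \<mu> p (grad_norm n \<I> m g))\<^sup>2"
  proof -
    have "Lp_norm \<mu> z (grad_norm n \<I> m g) \<le> Lp_norm \<mu> p (grad_norm n \<I> m g)"
      using grad_norm_le[OF g bound] grad_norm_nonneg z
      by (intro Lp_norm_mono_exponent[OF grad_norm_measurable[OF g]]) auto
    then show ?thesis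
      using \<sigma>2_pos by (intro mult_left_mono power_mono) (auto simp: Lp_norm_def)
  qed
  finally have "(p - 2) * G' z \<le> (p - 2) * (2 * \<sigma>2 * (Lp_norm \<mu> p (grad_norm n \<I> m g))\<^sup>2)"
    using p2 by (intro mult_left_mono) auto
  then show ?thesis
    unfolding mvt by (simp add: algebra_simps)
qed

end

end

theorem proposition2p4:
  fixes X :: "nat \<Rightarrow> 'a topology" and n :: nat and \<mu> :: "(nat \<Rightarrow> 'a) measure"
    and \<I> :: "nat set set" and m :: "nat set \<Rightarrow> (nat \<Rightarrow> 'a) \<Rightarrow> (nat \<Rightarrow> 'a) measure"
    and \<sigma>2 :: real and f :: "(nat \<Rightarrow> 'a) \<Rightarrow> real" and p :: real
  assumes "\<forall>i\<in>{1..n}. Polish_top (X i)"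
    and "prob_space \<mu>" and "sets \<mu> = sets (prodM X {1..n})"
    and "\<I> \<subseteq> Pow {1..n}"
    and "\<forall>I\<in>\<I>. is_disintegration X n \<mu> I (m I)"
    and "LSI n \<mu> \<I> m \<sigma>2" and "\<sigma>2 > 0"
    and "Linfty \<mu> f" and "p \<ge> 2"
  shows "(Lp_norm \<mu> p f)\<^sup>2 - (Lp_norm \<mu> 2 f)\<^sup>2 \<le> 2 * \<sigma>2 * (p - 2) * (Lp_norm \<mu> p (grad_norm n \<I> m f))\<^sup>2 \<and>
         (Lp_norm \<mu> p f)\<^sup>2 - (Lp_norm \<mu> 2 f)\<^sup>2 \<le> 2 * \<sigma>2 * (p - 2) * (Lp_norm \<mu> p (h_norm n \<I> m f))\<^sup>2"
proof -
  interpret log_sobolev \<mu> X n \<I> m \<sigma>2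
    by (rule log_sobolev.intro[OF resampling_family.intro[OF assms(2) resampling_family_axioms.intro[OF assms(3-5)]]
          log_sobolev_axioms.intro[OF assms(6,7)]])
  obtain g C where g: "g \<in> borel_measurable \<mu>" and bound: "\<And>x. \<bar>g x\<bar> \<le> C"
    and Lp_eq: "\<And>q. Lp_norm \<mu> q f = Lp_norm \<mu> q g"
      "\<And>q. Lp_norm \<mu> q (grad_norm n \<I> m f) = Lp_norm \<mu> q (grad_norm n \<I> m g)"
      "\<And>q. Lp_norm \<mu> q (h_norm n \<I> m f) = Lp_norm \<mu> q (h_norm n \<I> m g)"
    using Linfty_bounded_representative[OF assms(8)] by blast
  have "(Lp_norm \<mu> p (grad_norm n \<I> m g))\<^sup>2 \<le> (Lp_norm \<mu> p (h_norm n \<I> m g))\<^sup>2"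
    using Lp_norm_grad_norm_le_h_norm[OF g bound] assms(9) by (intro power_mono) (auto simp: Lp_norm_def)
  then have "2 * \<sigma>2 * (p - 2) * (Lp_norm \<mu> p (grad_norm n \<I> m g))\<^sup>2
      \<le> 2 * \<sigma>2 * (p - 2) * (Lp_norm \<mu> p (h_norm n \<I> m g))\<^sup>2"
    using assms(7,9) by (intro mult_left_mono) auto
  then show ?thesis
    unfolding Lp_eq using Lp_norm_sq_diff_le[OF g bound assms(9)] by linarith
qed

end
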